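(* Let $\Pi=(P,\mathcal{L})$ and $\Pi'=(P',\mathcal{L}')$ be $n$-dimensional linear spaces, $n\ge 4$, both satisfying the exchange axiom and the axiom (P2), and let $k\ge 0$ be an integer with $n>2k+1$. Let $f$ be a bijection of $\mathcal{G}_{k}(\Pi)$ to $\mathcal{G}_{k}(\Pi')$ such that both $f$ and $f^{-1}$ send base subsets to base subsets. Then there is a collineation $g$ of $\Pi$ to $\Pi'$ with $f(S)=g(S)$ for all $S\in\mathcal{G}_k(\Pi)$.
   Context: A linear space $\Pi=(P,\mathcal{L})$ is a set $P$ of points with a family $\mathcal{L}$ of proper subsets (lines) such that each line has at least two points and any two distinct points $p,q$ lie on exactly one line $pq$. A subspace is a set $S\subset P$ with $pq\subset S$ for all distinct $p,q\in S$; $\overline{X}$ is the smallest subspace containing $X$. A set $X$ is independent if $\overline{X}$ is not spanned by a proper subset of $X$; a base of a subspace $S$ is an independent set spanning $S$. A subspace is $m$-dimensional if $m+1$ is the smallest number of points spanning it. Exchange axiom: for every $X\subset P$ and $p_1,p_2\in P\setminus\overline{X}$, $p_2\in\overline{X\cup\{p_1\}}$ implies $p_1\in\overline{X\cup\{p_2\}}$. Axiom (P2): every line contains at least three points. $\mathcal{G}_k(\Pi)$ is the set of $k$-dimensional subspaces. For a base $B$ of $\Pi$, the base subset of $\mathcal{G}_k(\Pi)$ associated with $B$ is the set of all $k$-dimensional subspaces spanned by points of $B$. A collineation of $\Pi$ to $\Pi'$ is a bijection $g:P\to P'$ with $g(\mathcal{L})=\mathcal{L}'$. *)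

theory Defs
  imports Main
begin

definition linear_space :: "'a set \<Rightarrow> 'a set set \<Rightarrow> bool" where
  "linear_space P L \<longleftrightarrow>
     (\<forall>l\<in>L. l \<subset> P) \<and>
     (\<forall>l\<in>L. \<exists>p q. p \<in> l \<and> q \<in> l \<and> p \<noteq> q) \<and>
     (\<forall>p\<in>P. \<forall>q\<in>P. p \<noteq> q \<longrightarrow> (\<exists>!l. l \<in> L \<and> p \<in> l \<and> q \<in> l))"

definition line_through :: "'a set set \<Rightarrow> 'a \<Rightarrow> 'a \<Rightarrow> 'a set" where
  "line_through L p q = (THE l. l \<in> L \<and> p \<in> l \<and> q \<in> l)"

definition subspace :: "'a set \<Rightarrow> 'a set set \<Rightarrow> 'a set \<Rightarrow> bool" where
  "subspace P L S \<longleftrightarrow> S \<subseteq> P \<and>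
     (\<forall>p\<in>S. \<forall>q\<in>S. p \<noteq> q \<longrightarrow> line_through L p q \<subseteq> S)"

definition span :: "'a set \<Rightarrow> 'a set set \<Rightarrow> 'a set \<Rightarrow> 'a set" where
  "span P L X = \<Inter>{S. subspace P L S \<and> X \<subseteq> S}"

definition independent :: "'a set \<Rightarrow> 'a set set \<Rightarrow> 'a set \<Rightarrow> bool" where
  "independent P L X \<longleftrightarrow> X \<subseteq> P \<and> (\<forall>Y. Y \<subset> X \<longrightarrow> span P L Y \<noteq> span P L X)"

definition base_of :: "'a set \<Rightarrow> 'a set set \<Rightarrow> 'a set \<Rightarrow> 'a set \<Rightarrow> bool" where
  "base_of P L S B \<longleftrightarrow> independent P L B \<and> span P L B = S"

definition base :: "'a set \<Rightarrow> 'a set set \<Rightarrow> 'a set \<Rightarrow> bool" where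
  "base P L B \<longleftrightarrow> base_of P L P B"

definition has_dim :: "'a set \<Rightarrow> 'a set set \<Rightarrow> 'a set \<Rightarrow> nat \<Rightarrow> bool" where
  "has_dim P L S m \<longleftrightarrow> subspace P L S \<and>
     (\<exists>X. finite X \<and> X \<subseteq> P \<and> card X = m + 1 \<and> span P L X = S) \<and>
     (\<forall>X. finite X \<and> X \<subseteq> P \<and> span P L X = S \<longrightarrow> m + 1 \<le> card X)"

definition exchange_axiom :: "'a set \<Rightarrow> 'a set set \<Rightarrow> bool" where
  "exchange_axiom P L \<longleftrightarrow>
     (\<forall>X p1 p2. X \<subseteq> P \<and> p1 \<in> P - span P L X \<and> p2 \<in> P - span P L X \<and>
        p2 \<in> span P L (X \<union> {p1}) \<longrightarrow> p1 \<in> span P L (X \<union> {p2}))"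

definition axiom_P2 :: "'a set set \<Rightarrow> bool" where
  "axiom_P2 L \<longleftrightarrow> (\<forall>l\<in>L. \<exists>a b c. a \<in> l \<and> b \<in> l \<and> c \<in> l \<and> a \<noteq> b \<and> a \<noteq> c \<and> b \<noteq> c)"

definition Grass :: "'a set \<Rightarrow> 'a set set \<Rightarrow> nat \<Rightarrow> 'a set set" where
  "Grass P L k = {S. has_dim P L S k}"

definition base_subset :: "'a set \<Rightarrow> 'a set set \<Rightarrow> nat \<Rightarrow> 'a set \<Rightarrow> 'a set set" where
  "base_subset P L k B = {S \<in> Grass P L k. \<exists>X. X \<subseteq> B \<and> span P L X = S}"

definition is_base_subset :: "'a set \<Rightarrow> 'a set set \<Rightarrow> nat \<Rightarrow> 'a set set \<Rightarrow> bool" where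
  "is_base_subset P L k A \<longleftrightarrow> (\<exists>B. base P L B \<and> A = base_subset P L k B)"

definition collineation :: "'a set \<Rightarrow> 'a set set \<Rightarrow> 'b set \<Rightarrow> 'b set set \<Rightarrow> ('a \<Rightarrow> 'b) \<Rightarrow> bool" where
  "collineation P L P' L' g \<longleftrightarrow> bij_betw g P P' \<and> (\<lambda>l. g ` l) ` L = L'"

end

(*
  On a base B of the linear space, the base subset of G_k consists of the spans of the
  (k+1)-subsets of B.  A family of such spans is contained in a second base subset exactly
  when it does not separate the points of B, i.e. when some j in B never occurs without some
  other i: then j may be exchanged for a third point of the line ij.  Since f and its inverse
  map base subsets to base subsets, this property is preserved, and a counting argument on the
  classes of (k+1)-subsets that contain j but avoid i (their pairwise intersections are largest
  exactly when they share j, which is where n > 2k+1 is used) shows that on every base f is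
  induced by a bijection onto a base of the second space.  The bijections of two bases sharing
  at least k+2 points agree on common points, and any two bases are joined by single exchanges,
  so they glue to one map g.  The same construction for the inverse of f yields the inverse of
  g; both maps preserve independence, hence lines, and g is the required collineation.
*)

theory Submission
  imports Defs "HOL.Binomial_Plus"
begin

section \<open>Families of subsets of fixed size\<close>

definition ksubsets :: "'a set \<Rightarrow> nat \<Rightarrow> 'a set set" where
  "ksubsets B m = {X. X \<subseteq> B \<and> card X = m}"

definition contains_avoids :: "'a set \<Rightarrow> nat \<Rightarrow> 'a \<Rightarrow> 'a \<Rightarrow> 'a set set" where
  "contains_avoids B m j i = {X \<in> ksubsets B m. j \<in> X \<and> i \<notin> X}"

definition separating :: "'a set \<Rightarrow> 'a set set \<Rightarrow> bool" where
  "separating B F \<longleftrightarrow> (\<forall>i\<in>B. \<forall>j\<in>B. i \<noteq> j \<longrightarrow> (\<exists>X\<in>F. j \<in> X \<and> i \<notin> X))"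

lemma ksubsets_finite: "finite B \<Longrightarrow> X \<in> ksubsets B m \<Longrightarrow> finite X"
  unfolding ksubsets_def by (blast intro: finite_subset)

lemma card_ksubsets_incl_excl:
  assumes "finite B" "In \<subseteq> B" "Out \<subseteq> B" "In \<inter> Out = {}" "card In \<le> m"
  shows "card {X \<in> ksubsets B m. In \<subseteq> X \<and> X \<inter> Out = {}}
    = (card B - card In - card Out) choose (m - card In)"
proof -
  have fin: "finite In" "finite Out" using assms by (simp_all add: finite_subset)
  have "bij_betw (\<lambda>Y. Y \<union> In) (ksubsets (B - In - Out) (m - card In))
          {X \<in> ksubsets B m. In \<subseteq> X \<and> X \<inter> Out = {}}"
  proof (rule bij_betw_byWitness[where f' = "\<lambda>X. X - In"])
    show "\<forall>Y\<in>ksubsets (B - In - Out) (m - card In). (Y \<union> In) - In = Y"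
      unfolding ksubsets_def by blast
    show "\<forall>X\<in>{X \<in> ksubsets B m. In \<subseteq> X \<and> X \<inter> Out = {}}. (X - In) \<union> In = X"
      by blast
    show "(\<lambda>Y. Y \<union> In) ` ksubsets (B - In - Out) (m - card In)
            \<subseteq> {X \<in> ksubsets B m. In \<subseteq> X \<and> X \<inter> Out = {}}"
    proof (rule image_subsetI)
      fix Y assume Y: "Y \<in> ksubsets (B - In - Out) (m - card In)"
      then have "finite Y" using assms(1) ksubsets_finite by blast
      with Y show "Y \<union> In \<in> {X \<in> ksubsets B m. In \<subseteq> X \<and> X \<inter> Out = {}}"
        using assms fin by (auto simp: ksubsets_def) (subst card_Un_disjoint; auto)
    qed
    show "(\<lambda>X. X - In) ` {X \<in> ksubsets B m. In \<subseteq> X \<and> X \<inter> Out = {}}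
            \<subseteq> ksubsets (B - In - Out) (m - card In)"
    proof (rule image_subsetI)
      fix X assume X: "X \<in> {X \<in> ksubsets B m. In \<subseteq> X \<and> X \<inter> Out = {}}"
      then have "finite X" using assms(1) ksubsets_finite by blast
      with X show "X - In \<in> ksubsets (B - In - Out) (m - card In)"
        using fin by (auto simp: ksubsets_def card_Diff_subset)
    qed
  qed
  then have "card {X \<in> ksubsets B m. In \<subseteq> X \<and> X \<inter> Out = {}}
      = card (B - In - Out) choose (m - card In)"
    using assms(1) by (simp add: bij_betw_same_card[symmetric] ksubsets_def n_subsets)
  also have "card (B - In - Out) = card B - card In - card Out"
  proof -
    have "B - In - Out = B - (In \<union> Out)" by blast
    then show ?thesis
      using assms fin card_Diff_subset[of "In \<union> Out" B] by (simp add: card_Un_disjoint)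
  qed
  finally show ?thesis .
qed

lemma exists_ksubset_incl_excl:
  assumes "finite B" "In \<subseteq> B" "Out \<subseteq> B" "In \<inter> Out = {}" "card In \<le> m"
    and "m + card Out \<le> card B"
  obtains X where "X \<in> ksubsets B m" "In \<subseteq> X" "X \<inter> Out = {}"
proof -
  have "0 < (card B - card In - card Out) choose (m - card In)"
    using assms(5,6) by simp
  then have "{X \<in> ksubsets B m. In \<subseteq> X \<and> X \<inter> Out = {}} \<noteq> {}"
    using card_ksubsets_incl_excl[OF assms(1-5)] by (metis card.empty less_irrefl)
  then show ?thesis using that by blast
qed

lemma separating_ksubsets:
  assumes "finite B" "1 \<le> m" "m < card B"
  shows "separating B (ksubsets B m)"
  unfolding separating_def
proof (intro ballI impI)
  fix i j assume "i \<in> B" "j \<in> B" "i \<noteq> j"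
  then obtain X where "X \<in> ksubsets B m" "{j} \<subseteq> X" "X \<inter> {i} = {}"
    using exists_ksubset_incl_excl[of B "{j}" "{i}" m] assms by auto
  then show "\<exists>X\<in>ksubsets B m. j \<in> X \<and> i \<notin> X" by blast
qed

lemma separating_Inter_containing:
  assumes sep: "separating B F" and F: "\<forall>X\<in>F. X \<subseteq> B" and p: "p \<in> B" and B: "2 \<le> card B"
  shows "{X \<in> F. p \<in> X} \<noteq> {}" "\<Inter>{X \<in> F. p \<in> X} = {p}"
proof -
  have "\<not> B \<subseteq> {p}" using B card_mono[of "{p}" B] by auto
  then obtain j where "j \<in> B" "j \<noteq> p" by blast
  then show ne: "{X \<in> F. p \<in> X} \<noteq> {}" using sep p unfolding separating_def by blast
  have "x = p" if x: "x \<in> \<Inter>{X \<in> F. p \<in> X}" for x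
  proof (rule ccontr)
    assume "x \<noteq> p"
    moreover have "x \<in> B" using x ne F by blast
    ultimately obtain X where "X \<in> F" "p \<in> X" "x \<notin> X" using sep p unfolding separating_def by blast
    then show False using x by blast
  qed
  then show "\<Inter>{X \<in> F. p \<in> X} = {p}" by blast
qed

lemma contains_avoids_Int:
  "contains_avoids B m j i \<inter> contains_avoids B m j' i'
     = {X \<in> ksubsets B m. {j, j'} \<subseteq> X \<and> X \<inter> {i, i'} = {}}"
  unfolding contains_avoids_def by auto

lemma contains_avoids_subset_iff:
  assumes B: "finite B" "2 \<le> m" "m + 2 \<le> card B"
    and ij: "i \<in> B" "j \<in> B" "i' \<in> B" "j' \<in> B" "i \<noteq> j"
  shows "contains_avoids B m j i \<subseteq> contains_avoids B m j' i' \<longleftrightarrow> j = j' \<and> i = i'"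
proof
  assume sub: "contains_avoids B m j i \<subseteq> contains_avoids B m j' i'"
  have jj: "j = j'"
  proof (rule ccontr)
    assume ne: "j \<noteq> j'"
    obtain X where "X \<in> ksubsets B m" "{j} \<subseteq> X" "X \<inter> {i, j'} = {}"
      by (rule exists_ksubset_incl_excl[of B "{j}" "{i, j'}" m])
        (use B ij ne in \<open>auto simp: card_insert_if\<close>)
    then show False using sub unfolding contains_avoids_def by blast
  qed
  have "i = i'"
  proof (rule ccontr)
    assume ne: "i \<noteq> i'"
    obtain X where "X \<in> ksubsets B m" "{j, i'} \<subseteq> X" "X \<inter> {i} = {}"
      by (rule exists_ksubset_incl_excl[of B "{j, i'}" "{i}" m])
        (use B ij ne in \<open>auto simp: card_insert_if\<close>)
    then show False using sub jj unfolding contains_avoids_def by blast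
  qed
  with jj show "j = j' \<and> i = i'" ..
qed simp

text \<open>Two classes share their contained point exactly when their intersection is as large as
  possible; this is how a bijection of \<open>m\<close>-subsets is made to reveal a map of points.\<close>

lemma card_contains_avoids_Int_eq_iff:
  assumes B: "finite B" "2 \<le> m" "2 * m < card B"
    and ij: "i \<in> B" "j \<in> B" "i' \<in> B" "j' \<in> B" "i \<noteq> j" "i' \<noteq> j'" "(i, j) \<noteq> (i', j')"
  shows "card (contains_avoids B m j i \<inter> contains_avoids B m j' i') = (card B - 3) choose (m - 1)
    \<longleftrightarrow> j = j'"
proof -
  let ?N = "card B" and ?K = "(card B - 3) choose (m - 1)"
  let ?card = "\<lambda>In Out. card {X \<in> ksubsets B m. In \<subseteq> X \<and> X \<inter> Out = {}}"
  have K_pos: "0 < ?K" using B by simp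
  have K_max: "(?N - 3) choose (m - 2) < ?K"
    by (rule binomial_strict_mono) (use B in linarith)+
  have "?N - 4 \<le> ?N - 3" by simp
  then have K_max': "(?N - 4) choose (m - 2) < ?K"
    using binomial_right_mono K_max le_less_trans by blast
  consider "j = j'" | "j \<noteq> j'" "j = i' \<or> i = j'" | "j \<noteq> j'" "j \<noteq> i'" "i \<noteq> j'" "i = i'"
    | "j \<noteq> j'" "j \<noteq> i'" "i \<noteq> j'" "i \<noteq> i'"
    by blast
  then show ?thesis
  proof cases
    case 1
    then have "?card {j} {i, i'} = ?K"
      using ij card_ksubsets_incl_excl[OF B(1), of "{j}" "{i, i'}" m] B
      by (auto simp: numeral_eq_Suc)
    then show ?thesis using 1 by (simp add: contains_avoids_Int)
  next
    case 2
    then have "contains_avoids B m j i \<inter> contains_avoids B m j' i' = {}"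
      unfolding contains_avoids_def by blast
    then show ?thesis using 2 K_pos by simp
  next
    case 3
    then have "?card {j, j'} {i} = (?N - 3) choose (m - 2)"
      using ij card_ksubsets_incl_excl[OF B(1), of "{j, j'}" "{i}" m] B
      by (auto simp: numeral_eq_Suc)
    then show ?thesis using 3 K_max by (simp add: contains_avoids_Int)
  next
    case 4
    then have "?card {j, j'} {i, i'} = (?N - 4) choose (m - 2)"
      using ij card_ksubsets_incl_excl[OF B(1), of "{j, j'}" "{i, i'}" m] B
      by (auto simp: numeral_eq_Suc)
    then show ?thesis using 4 K_max' by (simp add: contains_avoids_Int)
  qed
qed

locale separation_preserving =
  fixes B :: "'a set" and B' :: "'b set" and m :: nat and \<phi> :: "'a set \<Rightarrow> 'b set"
  assumes finite: "finite B" and card_eq: "card B' = card B"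
    and m_bounds: "2 \<le> m" "2 * m < card B"
    and bij: "bij_betw \<phi> (ksubsets B m) (ksubsets B' m)"
    and separating_iff: "\<And>F. F \<subseteq> ksubsets B m \<Longrightarrow> separating B' (\<phi> ` F) \<longleftrightarrow> separating B F"
begin

lemma finite': "finite B'"
proof (rule card_ge_0_finite)
  show "0 < card B'" using card_eq m_bounds by linarith
qed

lemma card_ge: "m + 2 \<le> card B"
  using m_bounds by linarith

lemma inverse: "separation_preserving B' B m (inv_into (ksubsets B m) \<phi>)"
proof
  show "bij_betw (inv_into (ksubsets B m) \<phi>) (ksubsets B' m) (ksubsets B m)"
    using bij by (rule bij_betw_inv_into)
  fix G assume G: "G \<subseteq> ksubsets B' m"
  let ?F = "inv_into (ksubsets B m) \<phi> ` G"
  have "?F \<subseteq> ksubsets B m" using G bij unfolding bij_betw_def by (blast intro: inv_into_into)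
  moreover have "\<phi> ` ?F = G" using G bij by (simp add: bij_betw_def image_inv_into_cancel)
  ultimately show "separating B ?F \<longleftrightarrow> separating B' G" using separating_iff by metis
qed (use finite' card_eq m_bounds in simp_all)

lemma contains_avoids_image_superset:
  assumes ij: "i \<in> B" "j \<in> B" "i \<noteq> j"
  shows "\<exists>a\<in>B'. \<exists>b\<in>B'. a \<noteq> b \<and> contains_avoids B' m b a \<subseteq> \<phi> ` contains_avoids B m j i"
proof -
  \<comment> \<open>The complement of a class is not separating, so its image avoids a whole class of \<open>B'\<close>.\<close>
  let ?F = "ksubsets B m - contains_avoids B m j i"
  have "\<not> separating B ?F"
  proof
    assume "separating B ?F"
    then obtain X where "X \<in> ?F" "j \<in> X" "i \<notin> X" using ij unfolding separating_def by blast
    then show False unfolding contains_avoids_def by blast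
  qed
  then have "\<not> separating B' (\<phi> ` ?F)" using separating_iff[of ?F] by simp
  then obtain a b where ab: "a \<in> B'" "b \<in> B'" "a \<noteq> b" and no_sep: "\<not> (\<exists>Y\<in>\<phi> ` ?F. b \<in> Y \<and> a \<notin> Y)"
    unfolding separating_def by meson
  have "contains_avoids B' m b a \<subseteq> \<phi> ` contains_avoids B m j i"
  proof
    fix Y assume Y: "Y \<in> contains_avoids B' m b a"
    then have "Y \<in> \<phi> ` ksubsets B m" using bij unfolding contains_avoids_def bij_betw_def by simp
    then obtain X where "X \<in> ksubsets B m" "Y = \<phi> X" by blast
    with Y no_sep show "Y \<in> \<phi> ` contains_avoids B m j i" unfolding contains_avoids_def by blast
  qed
  with ab show ?thesis by blast
qed

lemma image_contains_avoids:
  assumes ij: "i \<in> B" "j \<in> B" "i \<noteq> j"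
  shows "\<exists>a\<in>B'. \<exists>b\<in>B'. a \<noteq> b \<and> \<phi> ` contains_avoids B m j i = contains_avoids B' m b a"
proof -
  let ?\<psi> = "inv_into (ksubsets B m) \<phi>"
  have sub: "contains_avoids B m j i \<subseteq> ksubsets B m" "contains_avoids B' m b a \<subseteq> ksubsets B' m"
    for a b unfolding contains_avoids_def by auto
  obtain a b where ab: "a \<in> B'" "b \<in> B'" "a \<noteq> b"
    and sup: "contains_avoids B' m b a \<subseteq> \<phi> ` contains_avoids B m j i"
    using contains_avoids_image_superset[OF ij] by blast
  obtain c d where cd: "c \<in> B" "d \<in> B" "c \<noteq> d"
    and sup': "contains_avoids B m d c \<subseteq> ?\<psi> ` contains_avoids B' m b a"
    using separation_preserving.contains_avoids_image_superset[OF inverse ab] by blast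
  have "?\<psi> ` contains_avoids B' m b a \<subseteq> ?\<psi> ` \<phi> ` contains_avoids B m j i"
    using sup by (rule image_mono)
  also have "\<dots> = contains_avoids B m j i"
    using sub bij by (simp add: bij_betw_def inv_into_image_cancel)
  finally have "contains_avoids B m d c \<subseteq> contains_avoids B m j i" using sup'
    by (rule order_trans[rotated])
  then have "d = j \<and> c = i"
    using contains_avoids_subset_iff[OF finite m_bounds(1) card_ge cd(1,2) ij(1,2) cd(3)] by simp
  then have "contains_avoids B m j i \<subseteq> ?\<psi> ` contains_avoids B' m b a" using sup' by simp
  then have "\<phi> ` contains_avoids B m j i \<subseteq> \<phi> ` ?\<psi> ` contains_avoids B' m b a"
    by (rule image_mono)
  also have "\<dots> = contains_avoids B' m b a"
    using sub bij by (simp add: bij_betw_def image_inv_into_cancel)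
  finally show ?thesis using sup ab by blast
qed

lemma image_contains_avoids_same_point_iff:
  assumes ij: "i \<in> B" "j \<in> B" "i' \<in> B" "j' \<in> B" "i \<noteq> j" "i' \<noteq> j'" "(i, j) \<noteq> (i', j')"
    and ab: "a \<in> B'" "b \<in> B'" "a' \<in> B'" "b' \<in> B'" "a \<noteq> b" "a' \<noteq> b'"
    and img: "\<phi> ` contains_avoids B m j i = contains_avoids B' m b a"
      "\<phi> ` contains_avoids B m j' i' = contains_avoids B' m b' a'"
  shows "b = b' \<longleftrightarrow> j = j'"
proof -
  let ?C = "contains_avoids B m j i" and ?D = "contains_avoids B m j' i'"
  have sub: "?C \<subseteq> ksubsets B m" "?D \<subseteq> ksubsets B m" unfolding contains_avoids_def by auto
  have inj: "inj_on \<phi> (ksubsets B m)" using bij by (rule bij_betw_imp_inj_on)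
  have "(a, b) \<noteq> (a', b')"
  proof
    assume "(a, b) = (a', b')"
    then have "\<phi> ` ?C = \<phi> ` ?D" using img by simp
    then have "?C = ?D" using inj sub by (simp add: inj_on_image_eq_iff)
    then show False using contains_avoids_subset_iff[OF finite m_bounds(1) card_ge ij(1-5)] ij(7)
      by simp
  qed
  have "\<phi> ` (?C \<inter> ?D) = contains_avoids B' m b a \<inter> contains_avoids B' m b' a'"
    using img inj sub by (simp add: inj_on_image_Int)
  moreover have "inj_on \<phi> (?C \<inter> ?D)" using inj sub by (meson inj_on_subset le_infI1)
  ultimately have "card (contains_avoids B' m b a \<inter> contains_avoids B' m b' a') = card (?C \<inter> ?D)"
    by (metis card_image)
  then show ?thesis
    using card_contains_avoids_Int_eq_iff[OF finite' m_bounds(1) _ ab \<open>(a, b) \<noteq> (a', b')\<close>]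
      card_contains_avoids_Int_eq_iff[OF finite m_bounds ij] card_eq m_bounds(2)
    by simp
qed

lemma exists_point_avoiding: "\<exists>i\<in>B. i \<noteq> j \<and> i \<noteq> j'"
proof -
  have "\<not> B \<subseteq> {j, j'}"
  proof
    assume "B \<subseteq> {j, j'}"
    then have "card B \<le> card {j, j'}" by (simp add: card_mono)
    also have "\<dots> \<le> 2" by (simp add: card_insert_if)
    finally show False using m_bounds by linarith
  qed
  then show ?thesis by blast
qed

lemma exists_common_image_point:
  assumes j: "j \<in> B"
  shows "\<exists>b\<in>B'. \<forall>i\<in>B. i \<noteq> j \<longrightarrow>
    (\<exists>a\<in>B'. a \<noteq> b \<and> \<phi> ` contains_avoids B m j i = contains_avoids B' m b a)"
proof -
  obtain i0 where i0: "i0 \<in> B" "i0 \<noteq> j" using exists_point_avoiding by blast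
  obtain a0 b0 where ab0: "a0 \<in> B'" "b0 \<in> B'" "a0 \<noteq> b0"
    and img0: "\<phi> ` contains_avoids B m j i0 = contains_avoids B' m b0 a0"
    using image_contains_avoids[OF i0(1) j i0(2)] by blast
  have "\<exists>a\<in>B'. a \<noteq> b0 \<and> \<phi> ` contains_avoids B m j i = contains_avoids B' m b0 a"
    if i: "i \<in> B" "i \<noteq> j" for i
  proof (cases "i = i0")
    case True
    then show ?thesis using ab0 img0 by blast
  next
    case False
    obtain a b where ab: "a \<in> B'" "b \<in> B'" "a \<noteq> b"
      and img: "\<phi> ` contains_avoids B m j i = contains_avoids B' m b a"
      using image_contains_avoids[OF i(1) j i(2)] by blast
    have "b = b0"
      using image_contains_avoids_same_point_iff[OF i(1) j i0(1) j i(2) i0(2) _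
          ab(1,2) ab0(1,2) ab(3) ab0(3) img img0] False
      by simp
    then show ?thesis using ab img by blast
  qed
  then show ?thesis using ab0 by blast
qed

definition point_image :: "'a \<Rightarrow> 'b" where
  "point_image j = (SOME b. b \<in> B' \<and> (\<forall>i\<in>B. i \<noteq> j \<longrightarrow>
     (\<exists>a\<in>B'. a \<noteq> b \<and> \<phi> ` contains_avoids B m j i = contains_avoids B' m b a)))"

lemma point_image:
  assumes "j \<in> B"
  shows "point_image j \<in> B' \<and> (\<forall>i\<in>B. i \<noteq> j \<longrightarrow>
    (\<exists>a\<in>B'. a \<noteq> point_image j \<and>
      \<phi> ` contains_avoids B m j i = contains_avoids B' m (point_image j) a))"
  unfolding point_image_def by (rule someI_ex) (use exists_common_image_point[OF assms] in blast)

lemma point_image_mem_image: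
  assumes X: "X \<in> ksubsets B m" "j \<in> X"
  shows "point_image j \<in> \<phi> X"
proof -
  have "X \<noteq> B" using X m_bounds unfolding ksubsets_def by auto
  then obtain i where i: "i \<in> B" "i \<notin> X" using X unfolding ksubsets_def by blast
  have "j \<in> B" using X unfolding ksubsets_def by blast
  moreover have "i \<noteq> j" using i X(2) by blast
  ultimately obtain a where "\<phi> ` contains_avoids B m j i = contains_avoids B' m (point_image j) a"
    using point_image i(1) by blast
  moreover have "X \<in> contains_avoids B m j i" using X i unfolding contains_avoids_def by blast
  ultimately show ?thesis unfolding contains_avoids_def by blast
qed

lemma inj_on_point_image: "inj_on point_image B"
proof
  fix j j' assume j: "j \<in> B" "j' \<in> B" and eq: "point_image j = point_image j'"
  obtain i where i: "i \<in> B" "i \<noteq> j" "i \<noteq> j'" using exists_point_avoiding by blast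
  obtain a where a: "a \<in> B'" "a \<noteq> point_image j"
    "\<phi> ` contains_avoids B m j i = contains_avoids B' m (point_image j) a"
    using point_image[OF j(1)] i(1,2) by blast
  obtain a' where a': "a' \<in> B'" "a' \<noteq> point_image j'"
    "\<phi> ` contains_avoids B m j' i = contains_avoids B' m (point_image j') a'"
    using point_image[OF j(2)] i(1,3) by blast
  show "j = j'"
  proof (rule ccontr)
    assume "j \<noteq> j'"
    then show False
      using image_contains_avoids_same_point_iff[OF i(1) j(1) i(1) j(2) i(2) i(3) _ a(1) _ a'(1) _
          a(2) a'(2) a(3) a'(3)] point_image[OF j(1)] eq by auto
  qed
qed

theorem induced_by_bij: "\<exists>\<sigma>. bij_betw \<sigma> B B' \<and> (\<forall>X\<in>ksubsets B m. \<phi> X = \<sigma> ` X)"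
proof (intro exI conjI)
  have onto: "point_image ` B = B'"
  proof (rule card_subset_eq[OF finite'])
    show "point_image ` B \<subseteq> B'" using point_image by blast
    show "card (point_image ` B) = card B'" using inj_on_point_image card_eq
      by (simp add: card_image)
  qed
  then show "bij_betw point_image B B'" using inj_on_point_image by (simp add: bij_betw_def)
  show "\<forall>X\<in>ksubsets B m. \<phi> X = point_image ` X"
  proof
    fix X assume X: "X \<in> ksubsets B m"
    then have "\<phi> X \<in> ksubsets B' m" using bij by (auto simp: bij_betw_def)
    then have "finite (\<phi> X)" "card (\<phi> X) = m"
      using finite' ksubsets_finite unfolding ksubsets_def by auto
    moreover have "card (point_image ` X) = m"
      using X inj_on_point_image unfolding ksubsets_def by (simp add: card_image inj_on_subset)
    moreover have "point_image ` X \<subseteq> \<phi> X" using point_image_mem_image X by blast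
    ultimately show "\<phi> X = point_image ` X" using card_subset_eq by metis
  qed
qed

end

lemma ksubsets_1: "ksubsets B 1 = (\<lambda>x. {x}) ` B"
  unfolding ksubsets_def by (auto simp: card_1_singleton_iff)

lemma singletons_bij_induced_by_bij:
  assumes bij: "bij_betw \<phi> (ksubsets B 1) (ksubsets B' 1)"
  shows "\<exists>\<sigma>. bij_betw \<sigma> B B' \<and> (\<forall>X\<in>ksubsets B 1. \<phi> X = \<sigma> ` X)"
proof -
  define \<sigma> where "\<sigma> x = the_elem (\<phi> {x})" for x
  have "bij_betw (\<lambda>x. {x}) B (ksubsets B 1)" unfolding ksubsets_1 by (simp add: bij_betw_def)
  moreover have "bij_betw the_elem (ksubsets B' 1) B'"
    unfolding ksubsets_1 by (rule bij_betw_byWitness[where f' = "\<lambda>x. {x}"]) auto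
  ultimately have "bij_betw (the_elem \<circ> (\<phi> \<circ> (\<lambda>x. {x}))) B B'"
    using bij by (metis bij_betw_trans)
  then have "bij_betw \<sigma> B B'" unfolding \<sigma>_def comp_def .
  moreover have "\<phi> X = \<sigma> ` X" if X: "X \<in> ksubsets B 1" for X
  proof -
    obtain x where x: "x \<in> B" "X = {x}" using X unfolding ksubsets_1 by blast
    then have "\<phi> X \<in> (\<lambda>x. {x}) ` B'" using bij unfolding ksubsets_1 bij_betw_def by blast
    then obtain y where "\<phi> X = {y}" by blast
    then show ?thesis unfolding \<sigma>_def using x by simp
  qed
  ultimately show ?thesis by blast
qed

theorem ksubsets_bij_induced_by_bij:
  assumes "finite B" "card B' = card B" "1 \<le> m" "2 * m < card B"
    and "bij_betw \<phi> (ksubsets B m) (ksubsets B' m)"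
    and "\<And>F. F \<subseteq> ksubsets B m \<Longrightarrow> separating B' (\<phi> ` F) \<longleftrightarrow> separating B F"
  shows "\<exists>\<sigma>. bij_betw \<sigma> B B' \<and> (\<forall>X\<in>ksubsets B m. \<phi> X = \<sigma> ` X)"
proof (cases "m = 1")
  case True
  then show ?thesis using singletons_bij_induced_by_bij assms(5) by blast
next
  case False
  then interpret separation_preserving B B' m \<phi> by unfold_locales (use assms in auto)
  show ?thesis by (rule induced_by_bij)
qed

section \<open>Linear spaces with the exchange axiom\<close>

locale exchange_space =
  fixes P :: "'a set" and L :: "'a set set"
  assumes linear_space: "linear_space P L" and exchange_axiom: "exchange_axiom P L"
begin

lemma line_subset: "l \<in> L \<Longrightarrow> l \<subseteq> P"
  using linear_space unfolding linear_space_def by (meson psubset_imp_subset)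

lemma line_two_points: "l \<in> L \<Longrightarrow> \<exists>p q. p \<in> l \<and> q \<in> l \<and> p \<noteq> q"
  using linear_space unfolding linear_space_def by (elim conjE) (rule bspec)

lemma unique_line: "p \<in> P \<Longrightarrow> q \<in> P \<Longrightarrow> p \<noteq> q \<Longrightarrow> \<exists>!l. l \<in> L \<and> p \<in> l \<and> q \<in> l"
  using linear_space unfolding linear_space_def by (elim conjE) simp

lemma line_through:
  assumes "p \<in> P" "q \<in> P" "p \<noteq> q"
  shows "line_through L p q \<in> L" "p \<in> line_through L p q" "q \<in> line_through L p q"
  using theI'[OF unique_line[OF assms]] unfolding line_through_def by blast+

lemma line_through_eq:
  assumes "l \<in> L" "p \<in> l" "q \<in> l" "p \<noteq> q"
  shows "line_through L p q = l"
  unfolding line_through_def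
  using assms line_subset by (intro the1_equality unique_line) auto

lemma subspace_points: "subspace P L P"
  unfolding subspace_def using line_through(1) line_subset by simp

lemma span_superset: "X \<subseteq> span P L X"
  unfolding span_def by blast

lemma span_minimal: "subspace P L S \<Longrightarrow> X \<subseteq> S \<Longrightarrow> span P L X \<subseteq> S"
  unfolding span_def by blast

lemma span_mono: "X \<subseteq> Y \<Longrightarrow> span P L X \<subseteq> span P L Y"
  unfolding span_def by blast

lemma subspace_span: "X \<subseteq> P \<Longrightarrow> subspace P L (span P L X)"
  using subspace_points unfolding span_def subspace_def by (simp add: Inter_lower le_Inf_iff)

lemma span_subset_points: "X \<subseteq> P \<Longrightarrow> span P L X \<subseteq> P"
  using span_minimal subspace_points by blast

lemma span_subspace_eq: "subspace P L S \<Longrightarrow> span P L S = S"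
  using span_minimal span_superset by blast

lemma span_subset_spanI: "X \<subseteq> span P L Y \<Longrightarrow> Y \<subseteq> P \<Longrightarrow> span P L X \<subseteq> span P L Y"
  using span_minimal subspace_span by blast

lemma span_empty: "span P L {} = {}"
  using span_subspace_eq unfolding subspace_def by blast

lemma span_singleton: "p \<in> P \<Longrightarrow> span P L {p} = {p}"
  using span_subspace_eq unfolding subspace_def by blast

lemma exchange:
  assumes "X \<subseteq> P" "p \<in> P" "q \<in> P" "p \<notin> span P L X" "q \<notin> span P L X"
    and "q \<in> span P L (insert p X)"
  shows "p \<in> span P L (insert q X)"
  using exchange_axiom assms unfolding exchange_axiom_def by simp

lemma independent_iff: "independent P L I \<longleftrightarrow> I \<subseteq> P \<and> (\<forall>x\<in>I. x \<notin> span P L (I - {x}))"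
proof
  assume ind: "independent P L I"
  have IP: "I \<subseteq> P" and min: "\<And>Y. Y \<subset> I \<Longrightarrow> span P L Y \<noteq> span P L I"
    using ind unfolding independent_def by auto
  have "x \<notin> span P L (I - {x})" if x: "x \<in> I" for x
  proof
    assume "x \<in> span P L (I - {x})"
    then have "I \<subseteq> span P L (I - {x})" using span_superset[of "I - {x}"] by blast
    then have "span P L I \<subseteq> span P L (I - {x})" using IP by (intro span_subset_spanI) auto
    moreover have "span P L (I - {x}) \<subseteq> span P L I" by (rule span_mono) auto
    moreover have "I - {x} \<subset> I" using x by auto
    ultimately show False using min by blast
  qed
  with IP show "I \<subseteq> P \<and> (\<forall>x\<in>I. x \<notin> span P L (I - {x}))" by blast
next
  assume ind: "I \<subseteq> P \<and> (\<forall>x\<in>I. x \<notin> span P L (I - {x}))"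
  have "span P L Y \<noteq> span P L I" if Y: "Y \<subset> I" for Y
  proof
    assume eq: "span P L Y = span P L I"
    obtain x where x: "x \<in> I" "x \<notin> Y" using Y by blast
    have "x \<in> span P L Y" using eq x span_superset[of I] by blast
    moreover have "span P L Y \<subseteq> span P L (I - {x})" using Y x by (intro span_mono) blast
    ultimately show False using ind x by blast
  qed
  with ind show "independent P L I" unfolding independent_def by blast
qed

lemma independent_subset_points: "independent P L I \<Longrightarrow> I \<subseteq> P"
  unfolding independent_def by blast

lemma independent_not_in_span:
  assumes "independent P L I" "x \<in> I" "X \<subseteq> I" "x \<notin> X"
  shows "x \<notin> span P L X"
proof -
  have "span P L X \<subseteq> span P L (I - {x})" using assms by (intro span_mono) blast
  then show ?thesis using assms independent_iff by blast
qed

lemma independent_mono: "independent P L I \<Longrightarrow> J \<subseteq> I \<Longrightarrow> independent P L J"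
  unfolding independent_iff by (meson Diff_mono order_refl span_mono subset_iff)

lemma span_Int_independent: "independent P L I \<Longrightarrow> X \<subseteq> I \<Longrightarrow> span P L X \<inter> I = X"
  using independent_not_in_span span_superset by blast

lemma independent_insert:
  assumes I: "independent P L I" and y: "y \<in> P" "y \<notin> span P L I"
  shows "independent P L (insert y I)"
  unfolding independent_iff
proof (intro conjI ballI)
  show "insert y I \<subseteq> P" using I y independent_subset_points by blast
  fix x assume x: "x \<in> insert y I"
  show "x \<notin> span P L (insert y I - {x})"
  proof (cases "x = y")
    case True
    then have "insert y I - {x} \<subseteq> I" by blast
    then show ?thesis using y True span_mono by blast
  next
    case False
    then have xI: "x \<in> I" using x by blast
    have IP: "I - {x} \<subseteq> P" using I independent_subset_points by blast
    have nx: "x \<notin> span P L (I - {x})" using I xI independent_iff by blast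
    have ny: "y \<notin> span P L (I - {x})" using y span_mono[of "I - {x}" I] by blast
    show ?thesis
    proof
      assume "x \<in> span P L (insert y I - {x})"
      then have "x \<in> span P L (insert y (I - {x}))" using False by (simp add: insert_Diff_if)
      then have "y \<in> span P L (insert x (I - {x}))"
        using exchange[OF IP y(1) _ ny nx] IP xI independent_subset_points[OF I] by blast
      then show False using y xI by (simp add: insert_absorb)
    qed
  qed
qed

lemma independent_singleton: "p \<in> P \<Longrightarrow> independent P L {p}"
  using independent_insert[of "{}" p] span_empty by (simp add: independent_iff)

lemma independent_pair: "p \<in> P \<Longrightarrow> q \<in> P \<Longrightarrow> p \<noteq> q \<Longrightarrow> independent P L {p, q}"
  using independent_insert[OF independent_singleton[of q], of p] span_singleton[of q] by simp

lemma independent_triple_iff: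
  assumes "p \<in> P" "q \<in> P" "r \<in> P" "p \<noteq> q" "r \<noteq> p" "r \<noteq> q"
  shows "independent P L {r, p, q} \<longleftrightarrow> r \<notin> span P L {p, q}"
proof
  assume "independent P L {r, p, q}"
  then show "r \<notin> span P L {p, q}" by (rule independent_not_in_span) (use assms in auto)
next
  assume "r \<notin> span P L {p, q}"
  then show "independent P L {r, p, q}"
    using independent_insert[OF independent_pair[OF assms(1,2,4)] assms(3)] by simp
qed

lemma independent_span_bound_finite:
  assumes Y: "finite Y" "Y \<subseteq> P"
    and X: "finite X" "independent P L X" "X \<subseteq> span P L Y"
  shows "card X \<le> card Y"
  using X
proof (induction "card (X - Y)" arbitrary: X)
  case 0
  then have "X \<subseteq> Y" using Y by auto
  then show ?case using Y card_mono by blast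
next
  case (Suc d)
  then obtain x where x: "x \<in> X" "x \<notin> Y" by (metis Diff_iff card.empty ex_in_conv nat.distinct(1))
  have XP: "X - {x} \<subseteq> P" using Suc.prems(2) independent_subset_points by blast
  have "\<not> Y \<subseteq> span P L (X - {x})"
  proof
    assume "Y \<subseteq> span P L (X - {x})"
    then have "span P L Y \<subseteq> span P L (X - {x})" using XP by (rule span_subset_spanI)
    then show False using Suc.prems(2,3) x independent_iff by blast
  qed
  then obtain y where y: "y \<in> Y" "y \<notin> span P L (X - {x})" by blast
  define X' where "X' = insert y (X - {x})"
  have "independent P L (X - {x})" using Suc.prems(2) by (rule independent_mono) blast
  then have ind: "independent P L X'" unfolding X'_def using y Y(2)
    by (intro independent_insert) auto
  have "y \<notin> X - {x}" using y span_superset[of "X - {x}"] by blast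
  moreover have "card X > 0" using Suc.prems(1) x card_gt_0_iff by blast
  ultimately have card_X': "card X' = card X" unfolding X'_def using Suc.prems(1) x by simp
  have "X' \<subseteq> span P L Y" unfolding X'_def using Suc.prems(3) y span_superset[of Y] by blast
  moreover have "X' - Y = (X - Y) - {x}" unfolding X'_def using y by blast
  then have "d = card (X' - Y)" using Suc.hyps(2) Suc.prems(1) x by simp
  ultimately have "card X' \<le> card Y" using Suc.hyps(1) Suc.prems(1) ind unfolding X'_def by simp
  then show ?case using card_X' by simp
qed

lemma independent_span_bound:
  assumes "independent P L X" "finite Y" "Y \<subseteq> P" "X \<subseteq> span P L Y"
  shows "finite X" "card X \<le> card Y"
proof -
  show fin: "finite X"
  proof (rule ccontr)
    assume "infinite X"
    then obtain X0 where X0: "X0 \<subseteq> X" "finite X0" "card X0 = Suc (card Y)"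
      using infinite_arbitrarily_large by blast
    have "card X0 \<le> card Y"
      using independent_span_bound_finite[OF assms(2,3) X0(2) independent_mono[OF assms(1) X0(1)]]
        X0(1) assms(4) by blast
    then show False using X0 by simp
  qed
  show "card X \<le> card Y" using independent_span_bound_finite[OF assms(2,3) fin assms(1,4)] .
qed

lemma has_dimE:
  assumes "has_dim P L S m"
  obtains X where "finite X" "X \<subseteq> P" "card X = m + 1" "span P L X = S"
  using assms unfolding has_dim_def by blast

lemma has_dim_card_le:
  "has_dim P L S m \<Longrightarrow> finite X \<Longrightarrow> X \<subseteq> P \<Longrightarrow> span P L X = S \<Longrightarrow> m + 1 \<le> card X"
  unfolding has_dim_def by blast

lemma has_dim_span_independent:
  assumes X: "independent P L X" "finite X" "X \<noteq> {}"
  shows "has_dim P L (span P L X) (card X - 1)"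
  unfolding has_dim_def
proof (intro conjI allI impI)
  have XP: "X \<subseteq> P" using X independent_subset_points by blast
  then show "subspace P L (span P L X)" by (rule subspace_span)
  have card: "card X - 1 + 1 = card X" using X by (simp add: card_gt_0_iff)
  then show "\<exists>Z. finite Z \<and> Z \<subseteq> P \<and> card Z = card X - 1 + 1 \<and> span P L Z = span P L X"
    using X(2) XP by (intro exI[of _ X]) simp
  fix Z assume Z: "finite Z \<and> Z \<subseteq> P \<and> span P L Z = span P L X"
  then have "X \<subseteq> span P L Z" using span_superset[of X] by simp
  then have "card X \<le> card Z" using independent_span_bound(2)[OF X(1)] Z by blast
  then show "card X - 1 + 1 \<le> card Z" using card by simp
qed

lemma has_dim_unique:
  assumes a: "has_dim P L S a" and b: "has_dim P L S b"
  shows "a = b"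
proof -
  obtain Xa where "finite Xa" "Xa \<subseteq> P" "card Xa = a + 1" "span P L Xa = S"
    using a by (rule has_dimE)
  moreover obtain Xb where "finite Xb" "Xb \<subseteq> P" "card Xb = b + 1" "span P L Xb = S"
    using b by (rule has_dimE)
  ultimately show ?thesis using has_dim_card_le[OF a] has_dim_card_le[OF b]
    by (metis add_right_cancel le_antisym)
qed

lemma span_pair:
  assumes "p \<in> P" "q \<in> P" "p \<noteq> q"
  shows "span P L {p, q} = line_through L p q"
proof
  let ?l = "line_through L p q"
  have l: "?l \<in> L" "p \<in> ?l" "q \<in> ?l" using line_through[OF assms] by auto
  have "subspace P L ?l"
    unfolding subspace_def using line_subset[OF l(1)] line_through_eq[OF l(1)] by auto
  then show "span P L {p, q} \<subseteq> ?l" using l by (intro span_minimal) auto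
  have "subspace P L (span P L {p, q})" using assms by (intro subspace_span) auto
  moreover have "p \<in> span P L {p, q}" "q \<in> span P L {p, q}" using span_superset[of "{p, q}"] by auto
  ultimately show "?l \<subseteq> span P L {p, q}" using assms(3) unfolding subspace_def by blast
qed

lemma line_eq_span_pair:
  assumes "l \<in> L"
  obtains p q where "p \<in> l" "q \<in> l" "p \<noteq> q" "l = span P L {p, q}"
proof -
  obtain p q where pq: "p \<in> l" "q \<in> l" "p \<noteq> q" using line_two_points[OF assms] by blast
  then have "span P L {p, q} = l"
    using line_subset[OF assms] span_pair line_through_eq[OF assms] by (metis subsetD)
  with pq that show ?thesis by blast
qed

lemma exists_third_point:
  assumes P2: "axiom_P2 L" and pq: "p \<in> P" "q \<in> P" "p \<noteq> q"
  obtains r where "r \<in> span P L {p, q}" "r \<noteq> p" "r \<noteq> q"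
proof -
  have "\<forall>l\<in>L. \<exists>a b c. a \<in> l \<and> b \<in> l \<and> c \<in> l \<and> a \<noteq> b \<and> a \<noteq> c \<and> b \<noteq> c"
    using P2 unfolding axiom_P2_def .
  then obtain a b c
    where abc: "a \<in> line_through L p q" "b \<in> line_through L p q" "c \<in> line_through L p q"
    "a \<noteq> b" "a \<noteq> c" "b \<noteq> c"
    using line_through(1)[OF pq] by blast
  then obtain r where "r \<in> line_through L p q" "r \<noteq> p" "r \<noteq> q"
    by (cases "a \<noteq> p \<and> a \<noteq> q"; cases "b \<noteq> p \<and> b \<noteq> q") auto
  with that show ?thesis using span_pair[OF pq] by simp
qed

lemma span_Int_span_independent:
  assumes I: "independent P L I" and Y: "Y \<subseteq> I" "Z \<subseteq> I" "finite Y"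
  shows "span P L Y \<inter> span P L Z \<subseteq> span P L (Y \<inter> Z)"
proof -
  have IP: "I \<subseteq> P" using I by (rule independent_subset_points)
  have step: "span P L (Y \<inter> Z \<union> A) \<inter> span P L Z \<subseteq> span P L (Y \<inter> Z)"
    if "finite A" "A \<subseteq> I - Z" for A
    using that
  proof (induction A rule: finite_induct)
    case empty
    show ?case by simp
  next
    case (insert a A)
    let ?W = "Y \<inter> Z \<union> A"
    have WP: "?W \<subseteq> P" "Z \<union> A \<subseteq> P" using Y insert.prems IP by auto
    have a: "a \<in> I" "a \<notin> Z" "a \<in> P" using insert.prems IP by auto
    show ?case
    proof
      fix q assume q: "q \<in> span P L (Y \<inter> Z \<union> insert a A) \<inter> span P L Z"
      show "q \<in> span P L (Y \<inter> Z)"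
      proof (cases "q \<in> span P L ?W")
        case True
        have "A \<subseteq> I - Z" using insert.prems by simp
        with True q show ?thesis using insert.IH by blast
      next
        case False
        have WI: "?W \<subseteq> I" "Z \<union> A \<subseteq> I" using Y insert.prems by auto
        have aW: "a \<notin> ?W" "a \<notin> Z \<union> A" using a(2) insert.hyps(2) by auto
        have qP: "q \<in> P" using q span_subset_points[OF WP(2)] span_mono[of Z "Z \<union> A"] by blast
        have "q \<in> span P L (insert a ?W)" using q by (simp add: Un_insert_right)
        then have "a \<in> span P L (insert q ?W)"
          by (rule exchange[OF WP(1) a(3) qP independent_not_in_span[OF I a(1) WI(1) aW(1)] False])
        moreover have "insert q ?W \<subseteq> span P L (Z \<union> A)"
          using q span_mono[of Z "Z \<union> A"] span_superset[of "Z \<union> A"] by blast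
        ultimately have "a \<in> span P L (Z \<union> A)" using span_subset_spanI[OF _ WP(2)] by blast
        then show ?thesis using independent_not_in_span[OF I a(1) WI(2) aW(2)] by blast
      qed
    qed
  qed
  have "Y \<inter> Z \<union> (Y - Z) = Y" by blast
  moreover have "span P L (Y \<inter> Z \<union> (Y - Z)) \<inter> span P L Z \<subseteq> span P L (Y \<inter> Z)"
    using Y by (intro step) auto
  ultimately show ?thesis by argo
qed

lemma span_Inter_independent:
  assumes I: "independent P L I" and ne: "YY \<noteq> {}" and YY: "\<And>Y. Y \<in> YY \<Longrightarrow> Y \<subseteq> I \<and> finite Y"
  shows "(\<Inter>Y\<in>YY. span P L Y) = span P L (\<Inter>YY)"
proof
  show "span P L (\<Inter>YY) \<subseteq> (\<Inter>Y\<in>YY. span P L Y)" by (simp add: Inter_lower span_mono INT_greatest)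
  show "(\<Inter>Y\<in>YY. span P L Y) \<subseteq> span P L (\<Inter>YY)"
  proof
    fix q assume q: "q \<in> (\<Inter>Y\<in>YY. span P L Y)"
    obtain Y0 where Y0: "Y0 \<in> YY" using ne by blast
    then have "Y0 \<subseteq> Y0 \<and> q \<in> span P L Y0" using q by blast
    \<comment> \<open>A smallest subset of \<open>Y0\<close> whose span contains \<open>q\<close> lies in every member of \<open>YY\<close>.\<close>
    then obtain Z where Z: "Z \<subseteq> Y0 \<and> q \<in> span P L Z"
      and min: "\<forall>Z'. Z' \<subseteq> Y0 \<and> q \<in> span P L Z' \<longrightarrow> card Z \<le> card Z'"
      using ex_has_least_nat[of "\<lambda>Z. Z \<subseteq> Y0 \<and> q \<in> span P L Z" Y0 card] by blast
    have Y0I: "finite Y0" "Y0 \<subseteq> I" using YY[OF Y0] by auto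
    then have finZ: "finite Z" using Z finite_subset by blast
    have "Z \<subseteq> Y" if Y: "Y \<in> YY" for Y
    proof -
      have "q \<in> span P L Z \<inter> span P L Y" using Z q Y by blast
      also have "\<dots> \<subseteq> span P L (Z \<inter> Y)"
        using span_Int_span_independent[OF I _ _ finZ] Z Y0I YY[OF Y] by blast
      finally have "card Z \<le> card (Z \<inter> Y)" using min Z by blast
      then have "Z \<inter> Y = Z" using card_seteq[OF finZ, of "Z \<inter> Y"] by blast
      then show ?thesis by blast
    qed
    then show "q \<in> span P L (\<Inter>YY)" using Z span_mono[of Z "\<Inter>YY"] by blast
  qed
qed

lemma eq_of_span_images_eq:
  assumes C: "finite C" "inj_on \<sigma> C" "independent P L (\<sigma> ` C)" "p \<in> C"
    and m: "1 \<le> m" "m < card C"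
    and eq: "\<forall>X\<in>ksubsets C m. span P L (\<tau> ` X) = span P L (\<sigma> ` X)"
  shows "\<tau> p = \<sigma> p"
proof -
  let ?YY = "{X \<in> ksubsets C m. p \<in> X}"
  have sep: "separating C (ksubsets C m)" using C m by (intro separating_ksubsets)
  have YY: "?YY \<noteq> {}" "\<Inter>?YY = {p}"
    using separating_Inter_containing[OF sep _ C(4)] m unfolding ksubsets_def by auto
  have sub: "\<forall>X\<in>?YY. X \<subseteq> C" unfolding ksubsets_def by blast
  have "(\<Inter>X\<in>?YY. \<sigma> ` X) = \<sigma> ` \<Inter>?YY" using image_INT[OF C(2) sub] YY(1) by auto
  also have "\<dots> = {\<sigma> p}" using YY(2) by simp
  finally have Inter: "\<Inter>((`) \<sigma> ` ?YY) = {\<sigma> p}" by simp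
  have "\<sigma> p \<in> P" using C(3,4) independent_subset_points by blast
  have "(\<Inter>Z\<in>(`) \<sigma> ` ?YY. span P L Z) = span P L (\<Inter>((`) \<sigma> ` ?YY))"
    using YY(1) sub ksubsets_finite[OF C(1)] by (intro span_Inter_independent[OF C(3)]) auto
  also have "\<dots> = {\<sigma> p}" using Inter span_singleton[OF \<open>\<sigma> p \<in> P\<close>] by simp
  finally have "(\<Inter>X\<in>?YY. span P L (\<sigma> ` X)) = {\<sigma> p}" by simp
  moreover have "\<tau> p \<in> span P L (\<sigma> ` X)" if "X \<in> ?YY" for X
    using that eq span_superset[of "\<tau> ` X"] by blast
  ultimately show ?thesis using YY(1) by blast
qed

lemma Grass_iff:
  "S \<in> Grass P L k \<longleftrightarrow> (\<exists>X. independent P L X \<and> finite X \<and> card X = k + 1 \<and> span P L X = S)"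
proof
  assume "S \<in> Grass P L k"
  then have dim: "has_dim P L S k" unfolding Grass_def by simp
  then obtain X where X: "finite X" "X \<subseteq> P" "card X = k + 1" "span P L X = S"
    by (rule has_dimE)
  have "span P L Y \<noteq> span P L X" if Y: "Y \<subset> X" for Y
  proof
    assume "span P L Y = span P L X"
    moreover have "finite Y" "Y \<subseteq> P" using X Y finite_subset by auto
    ultimately have "k + 1 \<le> card Y" using has_dim_card_le[OF dim] X(4) by simp
    moreover have "card Y < card X" using Y X(1) by (rule psubset_card_mono[rotated])
    ultimately show False using X(3) by simp
  qed
  then have "independent P L X" unfolding independent_def using X(2) by blast
  with X show "\<exists>X. independent P L X \<and> finite X \<and> card X = k + 1 \<and> span P L X = S" by blast
next
  assume "\<exists>X. independent P L X \<and> finite X \<and> card X = k + 1 \<and> span P L X = S"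
  then obtain X where X: "independent P L X" "finite X" "card X = k + 1" "span P L X = S" by blast
  then have "has_dim P L S (card X - 1)" using has_dim_span_independent[of X] by fastforce
  then show "S \<in> Grass P L k" unfolding Grass_def using X(3) by simp
qed

section \<open>Bases and base subsets\<close>

lemma base_eq_if_subset:
  assumes B: "base P L B" and B': "base P L B'" and sub: "B \<subseteq> B'"
  shows "B = B'"
proof (rule ccontr)
  assume "B \<noteq> B'"
  then obtain x where x: "x \<in> B'" "x \<notin> B" using sub by blast
  have "x \<in> span P L B"
    using x B B' independent_subset_points unfolding base_def base_of_def by blast
  moreover have "span P L B \<subseteq> span P L (B' - {x})" using sub x by (intro span_mono) blast
  ultimately show False using x B' independent_iff unfolding base_def base_of_def by blast
qed

lemma base_exchange:
  assumes B: "base P L B" and B': "base P L B'" and x: "x \<in> B" "x \<notin> B'"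
  obtains y where "y \<in> B' - B" "base P L (insert y (B - {x}))"
proof -
  have I: "independent P L B" "span P L B = P" "span P L B' = P"
    using B B' unfolding base_def base_of_def by auto
  have BP: "B \<subseteq> P" "B' \<subseteq> P" using I(1) B' independent_subset_points unfolding base_def base_of_def
    by auto
  have nx: "x \<notin> span P L (B - {x})" using I(1) x independent_iff by blast
  have "\<not> B' \<subseteq> span P L (B - {x})"
  proof
    assume "B' \<subseteq> span P L (B - {x})"
    then have "span P L B' \<subseteq> span P L (B - {x})" using BP by (intro span_subset_spanI) auto
    then show False using I(3) x(1) BP nx by blast
  qed
  then obtain y where y: "y \<in> B'" "y \<notin> span P L (B - {x})" by blast
  have yP: "y \<in> P" using y BP by blast
  have "y \<notin> B" using y x span_superset[of "B - {x}"] by blast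
  define B'' where "B'' = insert y (B - {x})"
  have "independent P L (B - {x})" using I(1) by (rule independent_mono) blast
  then have I'': "independent P L B''" unfolding B''_def using yP y(2) by (rule independent_insert)
  then have B''P: "B'' \<subseteq> P" by (rule independent_subset_points)
  have "y \<in> span P L (insert x (B - {x}))" using yP I(2) x(1) by (simp add: insert_absorb)
  then have "x \<in> span P L B''"
    unfolding B''_def using exchange[of "B - {x}" x y] BP x(1) yP nx y(2) by blast
  then have "B \<subseteq> span P L B''" unfolding B''_def using span_superset[of B''] B''_def by blast
  then have "span P L B'' = P" using I(2) span_subset_spanI[OF _ B''P] span_subset_points[OF B''P]
    by blast
  then have "base P L B''" using I'' unfolding base_def base_of_def by simp
  with that y \<open>y \<notin> B\<close> show ?thesis unfolding B''_def by blast
qed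

lemma span_replace_point:
  assumes X: "X \<subseteq> P" "i \<in> X" "j \<in> X" "i \<noteq> j" and r: "r \<in> P" "r \<in> span P L {i, j}"
    and j: "j \<in> span P L {i, r}"
  shows "span P L (insert r (X - {j})) = span P L X"
proof
  have "span P L {i, j} \<subseteq> span P L X" using X by (intro span_mono) auto
  then have "insert r (X - {j}) \<subseteq> span P L X" using r span_superset[of X] by blast
  then show "span P L (insert r (X - {j})) \<subseteq> span P L X" using X(1) by (rule span_subset_spanI)
  have "span P L {i, r} \<subseteq> span P L (insert r (X - {j}))"
    using X(2,4) by (intro span_mono) auto
  then have "X \<subseteq> span P L (insert r (X - {j}))"
    using j span_superset[of "insert r (X - {j})"] by blast
  then show "span P L X \<subseteq> span P L (insert r (X - {j}))" using X(1) r(1)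
    by (intro span_subset_spanI) auto
qed

lemma line_exchange:
  assumes "i \<in> P" "j \<in> P" "r \<in> P" "r \<in> span P L {i, j}" "r \<noteq> i" "i \<noteq> j"
  shows "j \<in> span P L {i, r}"
proof -
  have "j \<in> span P L (insert r {i})"
    using exchange[of "{i}" j r] assms span_singleton by (simp add: insert_commute)
  then show ?thesis by (simp add: insert_commute)
qed

lemma base_replace_point:
  assumes B: "base P L B" and ij: "i \<in> B" "j \<in> B" "i \<noteq> j"
    and r: "r \<in> span P L {i, j}" "r \<noteq> i" "r \<noteq> j"
  shows "base P L (insert r (B - {j}))" "r \<notin> B"
proof -
  have I: "independent P L B" "span P L B = P" using B unfolding base_def base_of_def by auto
  have BP: "B \<subseteq> P" using I(1) by (rule independent_subset_points)
  have rP: "r \<in> P" using r(1) span_subset_points[of "{i, j}"] ij BP by blast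
  have j: "j \<in> span P L {i, r}" using line_exchange[OF _ _ rP r(1,2) ij(3)] ij BP by blast
  have r_B: "r \<notin> span P L (B - {j})"
  proof
    assume "r \<in> span P L (B - {j})"
    then have "span P L {i, r} \<subseteq> span P L (B - {j})"
      using ij span_superset[of "B - {j}"] BP by (intro span_subset_spanI) auto
    then show False using j I(1) ij(2) independent_iff by blast
  qed
  have "independent P L (B - {j})" using I(1) by (rule independent_mono) blast
  then have "independent P L (insert r (B - {j}))" using rP r_B by (rule independent_insert)
  moreover have "span P L (insert r (B - {j})) = P"
    using span_replace_point[OF BP ij rP r(1) j] I(2) by simp
  ultimately show "base P L (insert r (B - {j}))" unfolding base_def base_of_def by simp
  show "r \<notin> B" using r_B r(3) span_superset[of "B - {j}"] by blast
qed

end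

lemma base_subset_subset_Grass: "base_subset P L k B \<subseteq> Grass P L k"
  unfolding base_subset_def by blast

locale finite_dim_exchange_space = exchange_space +
  fixes n :: nat
  assumes has_dim_points: "has_dim P L P n"
begin

lemma base_finite_card:
  assumes "base P L B"
  shows "finite B" "card B = n + 1"
proof -
  obtain Y where Y: "finite Y" "Y \<subseteq> P" "card Y = n + 1" "span P L Y = P"
    using has_dim_points by (rule has_dimE)
  have B: "independent P L B" "span P L B = P" using assms unfolding base_def base_of_def by auto
  then show fin: "finite B"
    using independent_span_bound(1)[OF B(1) Y(1,2)] Y(4) independent_subset_points by blast
  have "B \<noteq> {}" using B(2) Y span_empty by auto
  then have "has_dim P L P (card B - 1)" using has_dim_span_independent[OF B(1) fin] B(2) by simp
  then have "card B - 1 = n" using has_dim_points has_dim_unique by blast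
  moreover have "card B \<noteq> 0" using fin \<open>B \<noteq> {}\<close> by simp
  ultimately show "card B = n + 1" by linarith
qed

lemma independent_extend_base:
  assumes "independent P L I" "finite I"
  obtains B where "base P L B" "I \<subseteq> B"
proof -
  obtain Y where Y: "finite Y" "Y \<subseteq> P" "card Y = n + 1" "span P L Y = P"
    using has_dim_points by (rule has_dimE)
  have "\<exists>B. base P L B \<and> I \<subseteq> B" if "independent P L I" "finite I" "n + 1 - card I = d" for I d
    using that
  proof (induction d arbitrary: I rule: less_induct)
    case (less d)
    show ?case
    proof (cases "span P L I = P")
      case True
      then show ?thesis using less.prems(1) unfolding base_def base_of_def by blast
    next
      case False
      have IP: "I \<subseteq> P" using less.prems independent_subset_points by blast
      then obtain y where y: "y \<in> P" "y \<notin> span P L I" using False span_subset_points by blast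
      have ind: "independent P L (insert y I)" using less.prems(1) y by (rule independent_insert)
      have "y \<notin> I" using y span_superset[of I] by blast
      moreover have "card (insert y I) \<le> n + 1"
        using independent_span_bound(2)[OF ind Y(1,2)] Y(3,4) y(1) IP by simp
      ultimately have "n + 1 - card (insert y I) < d" using less.prems by simp
      then show ?thesis using less.IH ind less.prems(2) by blast
    qed
  qed
  with assms that show ?thesis by blast
qed

lemma base_subset_eq:
  assumes B: "base P L B"
  shows "base_subset P L k B = span P L ` ksubsets B (k + 1)"
proof
  have I: "independent P L B" using B unfolding base_def base_of_def by blast
  have fin: "finite B" using B by (rule base_finite_card)
  show "base_subset P L k B \<subseteq> span P L ` ksubsets B (k + 1)"
  proof
    fix S assume "S \<in> base_subset P L k B"
    then obtain X where S: "has_dim P L S k" "X \<subseteq> B" "span P L X = S"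
      unfolding base_subset_def Grass_def by blast
    have X: "independent P L X" "finite X" using I fin S(2) independent_mono finite_subset by blast+
    have "X \<noteq> {}"
    proof
      assume "X = {}"
      obtain Z where "card Z = k + 1" "span P L Z = S" using S(1) by (rule has_dimE)
      then show False using \<open>X = {}\<close> S(3) span_empty span_superset[of Z] by auto
    qed
    then have "has_dim P L S (card X - 1)" using has_dim_span_independent[OF X] S(3) by simp
    then have "card X - 1 = k" using has_dim_unique[OF S(1)] by simp
    moreover have "card X \<noteq> 0" using X(2) \<open>X \<noteq> {}\<close> by simp
    ultimately have "card X = k + 1" by linarith
    then show "S \<in> span P L ` ksubsets B (k + 1)" using S unfolding ksubsets_def by blast
  qed
  show "span P L ` ksubsets B (k + 1) \<subseteq> base_subset P L k B"
  proof
    fix S assume "S \<in> span P L ` ksubsets B (k + 1)"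
    then obtain X where X: "X \<subseteq> B" "card X = k + 1" "S = span P L X" unfolding ksubsets_def by blast
    then have "independent P L X" "finite X" using I fin independent_mono finite_subset by blast+
    then have "S \<in> Grass P L k" using Grass_iff X by blast
    then show "S \<in> base_subset P L k B" unfolding base_subset_def using X by blast
  qed
qed

lemma bij_betw_span_ksubsets:
  assumes B: "base P L B"
  shows "bij_betw (span P L) (ksubsets B (k + 1)) (base_subset P L k B)"
proof -
  have "independent P L B" using B unfolding base_def base_of_def by blast
  then have "inj_on (span P L) (ksubsets B (k + 1))"
    unfolding ksubsets_def by (intro inj_onI) (metis mem_Collect_eq span_Int_independent)
  then show ?thesis unfolding bij_betw_def base_subset_eq[OF B] by blast
qed

lemma subset_base_if_separating:
  assumes B: "base P L B" and B': "base P L B'" and F: "F \<subseteq> ksubsets B (k + 1)"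
    and sep: "separating B F" and card: "2 \<le> card B" and sub: "span P L ` F \<subseteq> base_subset P L k B'"
  shows "B \<subseteq> B'"
proof
  fix p assume p: "p \<in> B"
  have I: "independent P L B" "independent P L B'" using B B' unfolding base_def base_of_def by auto
  have fin: "finite B" "finite B'" using B B' by (simp_all add: base_finite_card)
  let ?YY = "{X \<in> F. p \<in> X}"
  have FB: "\<forall>X\<in>F. X \<subseteq> B" using F unfolding ksubsets_def by blast
  have YY: "?YY \<noteq> {}" "\<Inter>?YY = {p}" using separating_Inter_containing[OF sep FB p card] by auto
  have YY_fin: "\<forall>X\<in>?YY. X \<subseteq> B \<and> finite X" using FB fin(1) finite_subset by blast
  define g where "g X = span P L X \<inter> B'" for X
  have g: "g X \<subseteq> B' \<and> finite (g X) \<and> span P L (g X) = span P L X" if X: "X \<in> F" for X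
  proof -
    obtain Z where Z: "Z \<in> ksubsets B' (k + 1)" "span P L X = span P L Z"
      using sub X base_subset_eq[OF B'] by blast
    moreover have "Z \<subseteq> B'" using Z(1) unfolding ksubsets_def by blast
    ultimately have "g X = Z" unfolding g_def using span_Int_independent[OF I(2)] by simp
    then show ?thesis using Z fin(2) ksubsets_finite unfolding ksubsets_def by auto
  qed
  have pP: "p \<in> P" using p I(1) independent_subset_points by blast
  have "span P L (\<Inter>(g ` ?YY)) = (\<Inter>Z\<in>g ` ?YY. span P L Z)"
    using g YY(1) by (intro span_Inter_independent[OF I(2), symmetric]) auto
  also have "\<dots> = (\<Inter>X\<in>?YY. span P L X)" using g by simp
  also have "\<dots> = span P L (\<Inter>?YY)" using YY(1) YY_fin by (intro span_Inter_independent[OF I(1)]) auto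
  also have "\<dots> = {p}" using YY(2) span_singleton[OF pP] by simp
  finally have W: "span P L (\<Inter>(g ` ?YY)) = {p}" .
  then have "\<Inter>(g ` ?YY) \<noteq> {}" using span_empty by auto
  moreover have "\<Inter>(g ` ?YY) \<subseteq> {p}" using W span_superset by blast
  ultimately have "p \<in> \<Inter>(g ` ?YY)" by blast
  then show "p \<in> B'" using g YY(1) by blast
qed

lemma base_subset_inj:
  assumes B: "base P L B" and B': "base P L B'" and k: "k < n"
    and eq: "base_subset P L k B = base_subset P L k B'"
  shows "B = B'"
proof -
  have card: "finite B" "card B = n + 1" using B by (simp_all add: base_finite_card)
  then have "separating B (ksubsets B (k + 1))" using k by (intro separating_ksubsets) auto
  then have "B \<subseteq> B'"
    using card k eq base_subset_eq[OF B]
    by (intro subset_base_if_separating[OF B B' order_refl]) auto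
  then show ?thesis using base_eq_if_subset[OF B B'] by blast
qed

lemma not_separating_imp_other_base:
  assumes P2: "axiom_P2 L" and B: "base P L B" and F: "F \<subseteq> ksubsets B (k + 1)"
    and not_sep: "\<not> separating B F"
  obtains B' where "base P L B'" "B' \<noteq> B" "span P L ` F \<subseteq> base_subset P L k B'"
proof -
  obtain i j where ij: "i \<in> B" "j \<in> B" "i \<noteq> j" and F_ij: "\<forall>X\<in>F. j \<in> X \<longrightarrow> i \<in> X"
    using not_sep unfolding separating_def by meson
  have BP: "B \<subseteq> P" using B independent_subset_points unfolding base_def base_of_def by blast
  obtain r where r: "r \<in> span P L {i, j}" "r \<noteq> i" "r \<noteq> j"
    using exists_third_point[OF P2] ij BP by blast
  define B' where "B' = insert r (B - {j})"
  have B': "base P L B'" "r \<notin> B" unfolding B'_def using base_replace_point[OF B ij r] by simp_all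
  have "\<exists>Z\<subseteq>B'. span P L Z = span P L X" if X: "X \<in> F" for X
  proof (cases "j \<in> X")
    case False
    then show ?thesis using X F unfolding B'_def ksubsets_def by blast
  next
    case True
    then have "i \<in> X" "X \<subseteq> B" using F_ij X F unfolding ksubsets_def by auto
    then have "span P L (insert r (X - {j})) = span P L X"
      using span_replace_point[OF _ _ True ij(3) _ r(1) line_exchange[OF _ _ _ r(1,2) ij(3)]]
        BP r(1)
        span_subset_points[of "{i, j}"] ij by blast
    moreover have "insert r (X - {j}) \<subseteq> B'" using \<open>X \<subseteq> B\<close> unfolding B'_def by blast
    ultimately show ?thesis by blast
  qed
  moreover have "span P L ` F \<subseteq> Grass P L k"
    using F base_subset_eq[OF B, of k] base_subset_subset_Grass[of P L k B] by blast
  ultimately have "span P L ` F \<subseteq> base_subset P L k B'" unfolding base_subset_def by blast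
  moreover have "B' \<noteq> B" using B'(2) unfolding B'_def by blast
  ultimately show ?thesis using that B'(1) by blast
qed

end

definition inexact :: "'a set \<Rightarrow> 'a set set \<Rightarrow> nat \<Rightarrow> 'a set set \<Rightarrow> bool" where
  "inexact P L k \<X> \<longleftrightarrow> (\<exists>A A'. is_base_subset P L k A \<and> is_base_subset P L k A' \<and> A \<noteq> A' \<and>
     \<X> \<subseteq> A \<and> \<X> \<subseteq> A')"

context finite_dim_exchange_space
begin

lemma inexact_iff_not_separating:
  assumes P2: "axiom_P2 L" and B: "base P L B" and F: "F \<subseteq> ksubsets B (k + 1)" and k: "k < n"
  shows "inexact P L k (span P L ` F) \<longleftrightarrow> \<not> separating B F"
proof
  assume "inexact P L k (span P L ` F)"
  then obtain A1 A2 where A: "is_base_subset P L k A1" "is_base_subset P L k A2" "A1 \<noteq> A2"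
    and sub: "span P L ` F \<subseteq> A1" "span P L ` F \<subseteq> A2"
    unfolding inexact_def by (elim exE conjE) blast
  obtain B1 B2 where B12: "base P L B1" "A1 = base_subset P L k B1"
    "base P L B2" "A2 = base_subset P L k B2"
    using A(1,2) unfolding is_base_subset_def by blast
  have card: "2 \<le> card B" using B k by (simp add: base_finite_card)
  show "\<not> separating B F"
  proof
    assume sep: "separating B F"
    have "B \<subseteq> B1" using subset_base_if_separating[OF B B12(1) F sep card] sub(1) B12(2) by simp
    then have "B = B1" by (rule base_eq_if_subset[OF B B12(1)])
    moreover have "B \<subseteq> B2" using subset_base_if_separating[OF B B12(3) F sep card] sub(2) B12(4)
      by simp
    then have "B = B2" by (rule base_eq_if_subset[OF B B12(3)])
    ultimately show False using A(3) B12(2,4) by simp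
  qed
next
  assume "\<not> separating B F"
  then obtain B' where B': "base P L B'" "B' \<noteq> B" "span P L ` F \<subseteq> base_subset P L k B'"
    using not_separating_imp_other_base[OF P2 B F] by blast
  have "base_subset P L k B' \<noteq> base_subset P L k B" using base_subset_inj[OF B'(1) B k] B'(2)
    by blast
  moreover have "span P L ` F \<subseteq> base_subset P L k B" using F base_subset_eq[OF B] by blast
  moreover have "is_base_subset P L k (base_subset P L k B')"
    "is_base_subset P L k (base_subset P L k B)"
    using B B'(1) unfolding is_base_subset_def by blast+
  ultimately show "inexact P L k (span P L ` F)"
    unfolding inexact_def using B'(3)
    by (intro exI[of _ "base_subset P L k B'"] exI[of _ "base_subset P L k B"]) simp
qed

end

section \<open>Bijections preserving independence are collineations\<close>

locale exchange_space_pair = src: exchange_space P L + tgt: exchange_space P' L'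
  for P :: "'a set" and L :: "'a set set" and P' :: "'b set" and L' :: "'b set set" +
  fixes g :: "'a \<Rightarrow> 'b"
  assumes bij: "bij_betw g P P'"
    and independent_image_iff:
      "\<And>I. I \<subseteq> P \<Longrightarrow> finite I \<Longrightarrow> independent P' L' (g ` I) \<longleftrightarrow> independent P L I"
begin

lemma image_span_pair:
  assumes pq: "p \<in> P" "q \<in> P" "p \<noteq> q"
  shows "g ` span P L {p, q} = span P' L' {g p, g q}"
proof -
  have inj: "inj_on g P" and onto: "g ` P = P'" using bij by (auto simp: bij_betw_def)
  have gpq: "g p \<in> P'" "g q \<in> P'" "g p \<noteq> g q" using pq inj onto by (auto dest: inj_onD)
  have iff: "g r \<in> span P' L' {g p, g q} \<longleftrightarrow> r \<in> span P L {p, q}" if r: "r \<in> P" for r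
  proof (cases "r = p \<or> r = q")
    case True
    then show ?thesis using src.span_superset[of "{p, q}"] tgt.span_superset[of "{g p, g q}"]
      by auto
  next
    case False
    then have "g r \<noteq> g p" "g r \<noteq> g q" using r pq inj by (auto dest: inj_onD)
    then have "g r \<notin> span P' L' {g p, g q} \<longleftrightarrow> independent P' L' (g ` {r, p, q})"
      using tgt.independent_triple_iff[OF gpq(1,2)] gpq(3) r onto by auto
    also have "\<dots> \<longleftrightarrow> independent P L {r, p, q}" using r pq by (intro independent_image_iff) auto
    also have "\<dots> \<longleftrightarrow> r \<notin> span P L {p, q}" using src.independent_triple_iff[OF pq(1,2) r pq(3)] False
      by auto
    finally show ?thesis by blast
  qed
  have sub: "span P L {p, q} \<subseteq> P" "span P' L' {g p, g q} \<subseteq> P'"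
    using pq gpq by (simp_all add: src.span_subset_points tgt.span_subset_points)
  show ?thesis
  proof
    show "g ` span P L {p, q} \<subseteq> span P' L' {g p, g q}" using iff sub(1) by blast
    show "span P' L' {g p, g q} \<subseteq> g ` span P L {p, q}"
    proof
      fix s assume s: "s \<in> span P' L' {g p, g q}"
      then obtain r where "r \<in> P" "s = g r" using sub(2) onto by blast
      with s iff show "s \<in> g ` span P L {p, q}" by blast
    qed
  qed
qed

lemma image_line:
  assumes l: "l \<in> L"
  shows "g ` l \<in> L'"
proof -
  obtain p q where pq: "p \<in> l" "q \<in> l" "p \<noteq> q" "l = span P L {p, q}"
    using l by (rule src.line_eq_span_pair)
  have P: "p \<in> P" "q \<in> P" using pq src.line_subset[OF l] by auto
  have "g p \<in> P'" "g q \<in> P'" "g p \<noteq> g q"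
    using P pq(3) bij by (auto simp: bij_betw_def dest: inj_onD)
  moreover have "g ` l = span P' L' {g p, g q}" using image_span_pair[OF P pq(3)] pq(4) by simp
  ultimately show ?thesis using tgt.span_pair tgt.line_through(1) by simp
qed

lemma subspace_image:
  assumes S: "subspace P L S"
  shows "subspace P' L' (g ` S)"
  unfolding subspace_def
proof (intro conjI ballI impI)
  have SP: "S \<subseteq> P" using S unfolding subspace_def by blast
  then show "g ` S \<subseteq> P'" using bij bij_betw_imp_surj_on by blast
  fix a b assume ab: "a \<in> g ` S" "b \<in> g ` S" "a \<noteq> b"
  then obtain x y where xy: "x \<in> S" "y \<in> S" "a = g x" "b = g y" "x \<noteq> y" by blast
  then have P: "x \<in> P" "y \<in> P" "g x \<in> P'" "g y \<in> P'" using SP bij by (auto simp: bij_betw_apply)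
  have "line_through L' a b = g ` span P L {x, y}"
    using image_span_pair[OF P(1,2) xy(5)] tgt.span_pair[OF P(3,4)] xy(3,4) ab(3) by simp
  also have "\<dots> = g ` line_through L x y" using src.span_pair[OF P(1,2) xy(5)] by simp
  also have "\<dots> \<subseteq> g ` S" using S xy unfolding subspace_def by blast
  finally show "line_through L' a b \<subseteq> g ` S" .
qed

lemma subspace_preimage:
  assumes S': "subspace P' L' S'"
  shows "subspace P L (P \<inter> g -` S')"
  unfolding subspace_def
proof (intro conjI ballI impI)
  fix x y assume xy: "x \<in> P \<inter> g -` S'" "y \<in> P \<inter> g -` S'" "x \<noteq> y"
  then have P: "x \<in> P" "y \<in> P" "g x \<in> P'" "g y \<in> P'" "g x \<noteq> g y"
    using bij by (auto simp: bij_betw_def dest: inj_onD)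
  have "g ` line_through L x y = line_through L' (g x) (g y)"
    using image_span_pair[OF P(1,2) xy(3)] src.span_pair[OF P(1,2) xy(3)] tgt.span_pair[OF P(3-5)]
    by simp
  also have "\<dots> \<subseteq> S'" using S' xy P(5) unfolding subspace_def by blast
  finally show "line_through L x y \<subseteq> P \<inter> g -` S'"
    using src.line_subset[OF src.line_through(1)[OF P(1,2) xy(3)]] by blast
qed simp

lemma image_span:
  assumes X: "X \<subseteq> P"
  shows "g ` span P L X = span P' L' (g ` X)"
proof
  have gX: "g ` X \<subseteq> P'" using X bij bij_betw_imp_surj_on by blast
  have "span P L X \<subseteq> P \<inter> g -` span P' L' (g ` X)"
    using X tgt.span_superset[of "g ` X"]
    by (intro src.span_minimal subspace_preimage tgt.subspace_span gX) auto
  then show "g ` span P L X \<subseteq> span P' L' (g ` X)" by blast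
  show "span P' L' (g ` X) \<subseteq> g ` span P L X"
    using src.span_superset[of X]
    by (intro tgt.span_minimal subspace_image src.subspace_span X) auto
qed

lemma collineation: "collineation P L P' L' g"
  unfolding collineation_def
proof
  show "(\<lambda>l. g ` l) ` L = L'"
  proof
    show "(\<lambda>l. g ` l) ` L \<subseteq> L'" using image_line by blast
    show "L' \<subseteq> (\<lambda>l. g ` l) ` L"
    proof
      fix l' assume l': "l' \<in> L'"
      obtain a b where ab: "a \<in> l'" "b \<in> l'" "a \<noteq> b" "l' = span P' L' {a, b}"
        using l' by (rule tgt.line_eq_span_pair)
      then have "a \<in> g ` P" "b \<in> g ` P" using tgt.line_subset[OF l'] bij bij_betw_imp_surj_on
        by blast+
      then obtain p q where pq: "p \<in> P" "q \<in> P" "a = g p" "b = g q" by blast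
      then have "p \<noteq> q" using ab(3) by blast
      then have "span P L {p, q} \<in> L" "g ` span P L {p, q} = l'"
        using src.span_pair[OF pq(1,2)] src.line_through(1)[OF pq(1,2)] image_span_pair[OF pq(1,2)]
          ab(4) pq(3,4)
        by simp_all
      then show "l' \<in> (\<lambda>l. g ` l) ` L" by blast
    qed
  qed
qed (rule bij)

end

section \<open>Bijections of Grassmannians preserving base subsets\<close>

definition induces ::
    "'a set \<Rightarrow> 'a set set \<Rightarrow> 'b set \<Rightarrow> 'b set set \<Rightarrow> nat \<Rightarrow> ('a set \<Rightarrow> 'b set) \<Rightarrow>
      'a set \<Rightarrow> ('a \<Rightarrow> 'b) \<Rightarrow> bool"
  where "induces P L P' L' k f B \<sigma> \<longleftrightarrow> inj_on \<sigma> B \<and> base P' L' (\<sigma> ` B) \<and>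
    (\<forall>X\<in>ksubsets B (k + 1). f (span P L X) = span P' L' (\<sigma> ` X))"

lemma induces_cong:
  assumes "induces P L P' L' k f B \<sigma>" and eq: "\<And>p. p \<in> B \<Longrightarrow> \<tau> p = \<sigma> p"
  shows "induces P L P' L' k f B \<tau>"
proof -
  have img: "\<tau> ` X = \<sigma> ` X" if "X \<subseteq> B" for X
    using that eq by (intro image_cong) auto
  have "inj_on \<tau> B" using assms(1) eq unfolding induces_def by (metis inj_on_cong)
  with assms(1) show ?thesis unfolding induces_def ksubsets_def using img by simp
qed

locale grassmann_bijection =
  src: finite_dim_exchange_space P L n + tgt: finite_dim_exchange_space P' L' n
  for P :: "'a set" and L :: "'a set set" and P' :: "'b set" and L' :: "'b set set" and n :: nat +
  fixes k :: nat and f :: "'a set \<Rightarrow> 'b set"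
  assumes P2: "axiom_P2 L" and P2': "axiom_P2 L'" and k_less: "2 * k + 1 < n"
    and bij: "bij_betw f (Grass P L k) (Grass P' L' k)"
    and base_subset_image: "\<And>A. is_base_subset P L k A \<Longrightarrow> is_base_subset P' L' k (f ` A)"
    and base_subset_preimage:
      "\<And>A'. is_base_subset P' L' k A' \<Longrightarrow> is_base_subset P L k (inv_into (Grass P L k) f ` A')"
begin

lemma base_subset_Grass: "is_base_subset P L k A \<Longrightarrow> A \<subseteq> Grass P L k"
  unfolding is_base_subset_def base_subset_def by auto

lemma inverse: "grassmann_bijection P' L' P L n k (inv_into (Grass P L k) f)"
proof
  show "bij_betw (inv_into (Grass P L k) f) (Grass P' L' k) (Grass P L k)"
    using bij by (rule bij_betw_inv_into)
  fix A assume A: "is_base_subset P L k A"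
  have "inv_into (Grass P' L' k) (inv_into (Grass P L k) f) ` A = f ` A"
    using inv_into_inv_into_eq[OF bij] base_subset_Grass[OF A] by (intro image_cong) auto
  then show "is_base_subset P' L' k (inv_into (Grass P' L' k) (inv_into (Grass P L k) f) ` A)"
    using base_subset_image[OF A] by simp
qed (use P2 P2' k_less base_subset_preimage in auto)

lemma inexact_image:
  assumes "\<X> \<subseteq> Grass P L k" "inexact P L k \<X>"
  shows "inexact P' L' k (f ` \<X>)"
proof -
  obtain A1 A2 where A: "is_base_subset P L k A1" "is_base_subset P L k A2" "A1 \<noteq> A2"
    "\<X> \<subseteq> A1" "\<X> \<subseteq> A2"
    using assms(2) unfolding inexact_def by (elim exE conjE) blast
  have "inj_on f (Grass P L k)" using bij by (rule bij_betw_imp_inj_on)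
  then have "f ` A1 \<noteq> f ` A2" using A base_subset_Grass by (simp add: inj_on_image_eq_iff)
  then show ?thesis
    using A base_subset_image unfolding inexact_def
    by (intro exI[of _ "f ` A1"] exI[of _ "f ` A2"]) auto
qed

lemma inexact_image_iff:
  assumes X: "\<X> \<subseteq> Grass P L k"
  shows "inexact P' L' k (f ` \<X>) \<longleftrightarrow> inexact P L k \<X>"
proof
  have "f ` \<X> \<subseteq> Grass P' L' k" using X bij bij_betw_imp_surj_on by blast
  moreover assume "inexact P' L' k (f ` \<X>)"
  ultimately have "inexact P L k (inv_into (Grass P L k) f ` f ` \<X>)"
    by (rule grassmann_bijection.inexact_image[OF inverse])
  then show "inexact P L k \<X>" using X bij by (simp add: bij_betw_def inv_into_image_cancel)
qed (rule inexact_image[OF X])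

lemma separating_image_iff:
  assumes B: "base P L B" and B': "base P' L' B'"
    and F: "F \<subseteq> ksubsets B (k + 1)" and F': "F' \<subseteq> ksubsets B' (k + 1)"
    and img: "span P' L' ` F' = f ` span P L ` F"
  shows "separating B' F' \<longleftrightarrow> separating B F"
proof -
  have k: "k < n" using k_less by simp
  have "span P L ` F \<subseteq> span P L ` ksubsets B (k + 1)" using F by (rule image_mono)
  then have "span P L ` F \<subseteq> Grass P L k"
    using src.base_subset_eq[OF B] base_subset_subset_Grass[of P L k B] by simp
  then show ?thesis
    using tgt.inexact_iff_not_separating[OF P2' B' F' k] inexact_image_iff
      src.inexact_iff_not_separating[OF P2 B F k] img
    by simp
qed

lemma exists_induces:
  assumes B: "base P L B"
  obtains \<sigma> where "induces P L P' L' k f B \<sigma>"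
proof -
  let ?m = "k + 1"
  obtain B' where B': "base P' L' B'" "f ` base_subset P L k B = base_subset P' L' k B'"
    using base_subset_image[of "base_subset P L k B"] B unfolding is_base_subset_def by blast
  have span_B: "bij_betw (span P L) (ksubsets B ?m) (base_subset P L k B)"
    using B by (rule src.bij_betw_span_ksubsets)
  have span_B': "bij_betw (span P' L') (ksubsets B' ?m) (base_subset P' L' k B')"
    using B'(1) by (rule tgt.bij_betw_span_ksubsets)
  have "inj_on f (base_subset P L k B)"
    using bij_betw_imp_inj_on[OF bij] base_subset_subset_Grass by (rule inj_on_subset)
  then have f: "bij_betw f (base_subset P L k B) (base_subset P' L' k B')"
    using B'(2) by (simp add: bij_betw_def)
  define \<phi> where "\<phi> = inv_into (ksubsets B' ?m) (span P' L') \<circ> f \<circ> span P L"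
  have \<phi>: "bij_betw \<phi> (ksubsets B ?m) (ksubsets B' ?m)"
    unfolding \<phi>_def
    by (rule bij_betw_trans[OF span_B bij_betw_trans[OF f bij_betw_inv_into[OF span_B']]])
  have span_\<phi>: "span P' L' (\<phi> X) = f (span P L X)" if "X \<in> ksubsets B ?m" for X
    unfolding \<phi>_def using that span_B span_B' f
    by (simp add: bij_betw_def f_inv_into_f bij_betw_apply)
  have sep: "separating B' (\<phi> ` F) \<longleftrightarrow> separating B F" if F: "F \<subseteq> ksubsets B ?m" for F
  proof (rule separating_image_iff[OF B B'(1) F])
    have "\<phi> ` F \<subseteq> \<phi> ` ksubsets B ?m" using F by (rule image_mono)
    then show "\<phi> ` F \<subseteq> ksubsets B' ?m" using bij_betw_imp_surj_on[OF \<phi>] by simp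
    show "span P' L' ` \<phi> ` F = f ` span P L ` F"
      unfolding image_image
    proof (rule image_cong[OF refl])
      show "span P' L' (\<phi> X) = f (span P L X)" if "X \<in> F" for X using that F span_\<phi> by blast
    qed
  qed
  have fin: "finite B" "card B = n + 1" "card B' = n + 1"
    using B B' by (simp_all add: src.base_finite_card tgt.base_finite_card)
  then have "card B' = card B" "1 \<le> ?m" "2 * ?m < card B" using k_less by simp_all
  then obtain \<sigma> where \<sigma>: "bij_betw \<sigma> B B'" "\<forall>X\<in>ksubsets B ?m. \<phi> X = \<sigma> ` X"
    using ksubsets_bij_induced_by_bij[OF fin(1) _ _ _ \<phi> sep] by blast
  have "induces P L P' L' k f B \<sigma>"
    unfolding induces_def using \<sigma> B'(1) span_\<phi> by (simp add: bij_betw_def)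
  with that show ?thesis .
qed

lemma induces_agree:
  assumes B1: "base P L B1" "induces P L P' L' k f B1 \<sigma>1" and B2: "induces P L P' L' k f B2 \<sigma>2"
    and p: "p \<in> B1" "p \<in> B2" and card: "k + 1 < card (B1 \<inter> B2)"
  shows "\<sigma>2 p = \<sigma>1 p"
proof (rule tgt.eq_of_span_images_eq[where C = "B1 \<inter> B2" and m = "k + 1"])
  show "finite (B1 \<inter> B2)" using B1(1) src.base_finite_card(1) by blast
  show "inj_on \<sigma>1 (B1 \<inter> B2)" using B1(2) unfolding induces_def by (meson inf_le1 inj_on_subset)
  have "independent P' L' (\<sigma>1 ` B1)" using B1(2) unfolding induces_def base_def base_of_def by blast
  then show "independent P' L' (\<sigma>1 ` (B1 \<inter> B2))" by (rule tgt.independent_mono) blast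
  show "p \<in> B1 \<inter> B2" "1 \<le> k + 1" "k + 1 < card (B1 \<inter> B2)" using p card by simp_all
  show "\<forall>X\<in>ksubsets (B1 \<inter> B2) (k + 1). span P' L' (\<sigma>2 ` X) = span P' L' (\<sigma>1 ` X)"
  proof
    fix X assume "X \<in> ksubsets (B1 \<inter> B2) (k + 1)"
    then have "X \<in> ksubsets B1 (k + 1)" "X \<in> ksubsets B2 (k + 1)" unfolding ksubsets_def by auto
    then have "f (span P L X) = span P' L' (\<sigma>1 ` X)" "f (span P L X) = span P' L' (\<sigma>2 ` X)"
      using B1(2) B2 unfolding induces_def by blast+
    then show "span P' L' (\<sigma>2 ` X) = span P' L' (\<sigma>1 ` X)" by simp
  qed
qed

text \<open>Bases are connected by single exchanges, and two bases differing by one exchange share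
  \<open>n > k + 1\<close> points.\<close>

lemma induces_agree_all:
  assumes B1: "base P L B1" "induces P L P' L' k f B1 \<sigma>1"
    and B2: "base P L B2" "induces P L P' L' k f B2 \<sigma>2" and p: "p \<in> B1" "p \<in> B2"
  shows "\<sigma>1 p = \<sigma>2 p"
  using B1 p(1)
proof (induction "card (B1 - B2)" arbitrary: B1 \<sigma>1)
  case 0
  then have "B1 \<subseteq> B2" using src.base_finite_card(1)[OF 0(2)] by simp
  then have "B1 = B2" using src.base_eq_if_subset[OF 0(2) B2(1)] by blast
  moreover have "k + 1 < card B2" using src.base_finite_card(2)[OF B2(1)] k_less by simp
  ultimately show ?case using induces_agree[OF 0(2,3) B2(2) 0(4) p(2)] by simp
next
  case (Suc d)
  then obtain x where x: "x \<in> B1" "x \<notin> B2" by (metis Diff_iff card.empty ex_in_conv nat.distinct(1))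
  obtain y where y: "y \<in> B2 - B1" and B3: "base P L (insert y (B1 - {x}))"
    using src.base_exchange[OF Suc.prems(1) B2(1) x] by blast
  obtain \<sigma>3 where \<sigma>3: "induces P L P' L' k f (insert y (B1 - {x})) \<sigma>3"
    using B3 by (rule exists_induces)
  have fin: "finite B1" "card B1 = n + 1" using Suc.prems(1) by (simp_all add: src.base_finite_card)
  have p3: "p \<in> insert y (B1 - {x})" using Suc.prems(3) x p(2) by auto
  have "B1 \<inter> insert y (B1 - {x}) = B1 - {x}" using y by auto
  then have "card (B1 \<inter> insert y (B1 - {x})) = n" using fin x(1) by simp
  then have "\<sigma>3 p = \<sigma>1 p" using induces_agree[OF Suc.prems(1,2) \<sigma>3 Suc.prems(3) p3] k_less by simp
  moreover have "insert y (B1 - {x}) - B2 = (B1 - B2) - {x}" using y by auto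
  then have "d = card (insert y (B1 - {x}) - B2)" using Suc.hyps(2) fin(1) x by simp
  then have "\<sigma>3 p = \<sigma>2 p" using Suc.hyps(1) B3 \<sigma>3 p3 by blast
  ultimately show ?case by simp
qed

lemma exists_point_map: "\<exists>g. \<forall>B. base P L B \<longrightarrow> induces P L P' L' k f B g"
proof -
  define \<sigma> where "\<sigma> B = (SOME \<sigma>. induces P L P' L' k f B \<sigma>)" for B
  have \<sigma>: "induces P L P' L' k f B (\<sigma> B)" if "base P L B" for B
    using exists_induces[OF that] unfolding \<sigma>_def by (metis someI)
  define g where "g p = \<sigma> (SOME B. base P L B \<and> p \<in> B) p" for p
  have "induces P L P' L' k f B g" if B: "base P L B" for B
  proof (rule induces_cong[OF \<sigma>[OF B]])
    fix p assume p: "p \<in> B"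
    then have "\<exists>B. base P L B \<and> p \<in> B" using B by blast
    then have B0: "base P L (SOME B. base P L B \<and> p \<in> B)" "p \<in> (SOME B. base P L B \<and> p \<in> B)"
      by (metis (mono_tags, lifting) someI_ex)+
    show "g p = \<sigma> B p" unfolding g_def
      by (rule induces_agree_all[OF B0(1) \<sigma>[OF B0(1)] B \<sigma>[OF B] B0(2) p])
  qed
  then show ?thesis by blast
qed

lemma left_inverse:
  assumes g: "\<And>B. base P L B \<Longrightarrow> induces P L P' L' k f B g"
    and h: "\<And>B'. base P' L' B' \<Longrightarrow> induces P' L' P L k f' B' h"
    and f'_f: "\<And>S. S \<in> Grass P L k \<Longrightarrow> f' (f S) = S" and p: "p \<in> P"
  shows "h (g p) = p"
proof -
  obtain B where B: "base P L B" "{p} \<subseteq> B"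
    using src.independent_extend_base[OF src.independent_singleton[OF p]] by blast
  have gB: "inj_on g B" "base P' L' (g ` B)"
    "\<forall>X\<in>ksubsets B (k + 1). f (span P L X) = span P' L' (g ` X)"
    using g[OF B(1)] unfolding induces_def by auto
  have hB: "\<forall>Y\<in>ksubsets (g ` B) (k + 1). f' (span P' L' Y) = span P L (h ` Y)"
    using h[OF gB(2)] unfolding induces_def by auto
  have "(h \<circ> g) p = id p"
  proof (rule src.eq_of_span_images_eq[where C = B and m = "k + 1" and \<sigma> = id and \<tau> = "h \<circ> g"])
    show "finite B" "inj_on id B" "p \<in> B" "1 \<le> k + 1"
      using B src.base_finite_card(1) by auto
    show "independent P L (id ` B)" using B(1) unfolding base_def base_of_def by simp
    show "k + 1 < card B" using B(1) src.base_finite_card(2) k_less by simp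
    show "\<forall>X\<in>ksubsets B (k + 1). span P L ((h \<circ> g) ` X) = span P L (id ` X)"
    proof
      fix X assume X: "X \<in> ksubsets B (k + 1)"
      then have "g ` X \<in> ksubsets (g ` B) (k + 1)"
        using gB(1) unfolding ksubsets_def by (auto simp: card_image inj_on_subset)
      then have "span P L (h ` g ` X) = f' (span P' L' (g ` X))" using hB by simp
      also have "\<dots> = f' (f (span P L X))" using gB(3) X by simp
      also have "\<dots> = span P L X"
        using f'_f X src.base_subset_eq[OF B(1), of k] base_subset_subset_Grass[of P L k B] by blast
      finally show "span P L ((h \<circ> g) ` X) = span P L (id ` X)" by (simp add: image_comp)
    qed
  qed
  then show ?thesis by simp
qed

lemma independent_image:
  assumes g: "\<And>B. base P L B \<Longrightarrow> induces P L P' L' k f B g" and I: "independent P L I" "finite I"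
  shows "independent P' L' (g ` I)"
proof -
  obtain B where B: "base P L B" "I \<subseteq> B" using I by (rule src.independent_extend_base)
  then have "independent P' L' (g ` B)" using g unfolding induces_def base_def base_of_def by blast
  then show ?thesis using B(2) by (blast intro: tgt.independent_mono)
qed

theorem induced_by_collineation: "\<exists>g. collineation P L P' L' g \<and> (\<forall>S\<in>Grass P L k. f S = g ` S)"
proof -
  let ?f' = "inv_into (Grass P L k) f"
  interpret inv: grassmann_bijection P' L' P L n k ?f' by (rule inverse)
  obtain g where g: "\<And>B. base P L B \<Longrightarrow> induces P L P' L' k f B g"
    using exists_point_map by blast
  obtain h where h: "\<And>B'. base P' L' B' \<Longrightarrow> induces P' L' P L k ?f' B' h"
    using inv.exists_point_map by blast
  have hg: "h (g p) = p" if "p \<in> P" for p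
    using left_inverse[OF g h _ that] bij by (simp add: bij_betw_def)
  have gh: "g (h q) = q" if "q \<in> P'" for q
    using inv.left_inverse[OF h g _ that] bij by (simp add: bij_betw_def f_inv_into_f)
  have gP: "g p \<in> P'" if "p \<in> P" for p
    using tgt.independent_subset_points[OF independent_image[OF g src.independent_singleton]]
      that by simp
  have hP: "h q \<in> P" if "q \<in> P'" for q
    using src.independent_subset_points[OF inv.independent_image[OF h tgt.independent_singleton]]
      that by simp
  have "bij_betw g P P'" by (rule bij_betw_byWitness[where f' = h]) (use hg gh gP hP in auto)
  moreover have "independent P' L' (g ` I) \<longleftrightarrow> independent P L I" if I: "I \<subseteq> P" "finite I" for I
  proof
    assume "independent P' L' (g ` I)"
    then have "independent P L (h ` g ` I)" using inv.independent_image[OF h] I by blast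
    moreover have "h ` g ` I = I" using hg I by (force simp: image_image)
    ultimately show "independent P L I" by simp
  qed (use independent_image[OF g] I in blast)
  ultimately interpret exchange_space_pair P L P' L' g by unfold_locales
  have "f S = g ` S" if S: "S \<in> Grass P L k" for S
  proof -
    obtain X where X: "independent P L X" "finite X" "card X = k + 1" "span P L X = S"
      using S src.Grass_iff by blast
    obtain B where B: "base P L B" "X \<subseteq> B" using X(1,2) by (rule src.independent_extend_base)
    have "f S = span P' L' (g ` X)" using g[OF B(1)] X B(2) unfolding induces_def ksubsets_def
      by auto
    also have "\<dots> = g ` S" using image_span[OF src.independent_subset_points[OF X(1)]] X(4) by simp
    finally show ?thesis .
  qed
  with collineation show ?thesis by blast
qed

end

theorem theorem2p4:
  fixes P :: "'a set" and L :: "'a set set"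
    and P' :: "'b set" and L' :: "'b set set"
    and n k :: nat
    and f :: "'a set \<Rightarrow> 'b set"
  assumes "linear_space P L" and "linear_space P' L'"
    and "has_dim P L P n" and "has_dim P' L' P' n"
    and "n \<ge> 4"
    and "exchange_axiom P L" and "exchange_axiom P' L'"
    and "axiom_P2 L" and "axiom_P2 L'"
    and "n > 2 * k + 1"
    and "bij_betw f (Grass P L k) (Grass P' L' k)"
    and "\<And>A. is_base_subset P L k A \<Longrightarrow> is_base_subset P' L' k (f ` A)"
    and "\<And>A'. is_base_subset P' L' k A' \<Longrightarrow>
               is_base_subset P L k (inv_into (Grass P L k) f ` A')"
  shows "\<exists>g. collineation P L P' L' g \<and> (\<forall>S\<in>Grass P L k. f S = g ` S)"
proof -
  interpret grassmann_bijection P L P' L' n k f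
    by unfold_locales (use assms in auto)
  show ?thesis by (rule induced_by_collineation)
qed

end
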